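(* In the primal semi-discrete setting below, assume $D>0$ for all times, let $F$ be the energy-conserving mass flux, and let $u,D$ satisfy (M) and (C). (a) If $Q=q'F$ for some scalar function $q'(t)$ (with $q'F$ square integrable), then the energy $$E(t)=\int_\Omega\Big(\tfrac12 D|u|^2+g\big(\tfrac12D^2+bD\big)\Big)dS$$ is constant in time. (b) If $Q=qF$, where $q$ is the discrete potential vorticity, then both $E$ and the potential enstrophy $Z(t)=\int_\Omega q^2D\,dS$ are constant in time.
   Context: Primal setting. Let $\Omega$ be a smooth closed (compact, without boundary) oriented two-dimensional Riemannian surface (e.g. the sphere) with area form $dS$ and unit normal $\hat k$. For a tangent vector field $u$ let $u^\perp=\hat k\times u$; $\nabla$ and $\nabla\cdot$ denote the surface gradient and divergence, and $\nabla^\perp\gamma=\hat k\times\nabla\gamma$. $\Omega$ is divided into a mesh of elements $e$ with edges. Let $V^0\subset H^1(\Omega)$ be a finite-dimensional space of continuous piecewise polynomial functions containing the constants; $V^1\subset H(\mathrm{div},\Omega)$ a finite-dimensional space of piecewise polynomial tangent vector fields with continuous normal components across element edges; $V^2\subset L^2(\Omega)$ a finite-dimensional space of (discontinuous) piecewise polynomial functions containing the indicator function $\mathbf 1_e$ of every element; and assume $\nabla^\perp V^0\subset V^1$ and $\nabla\cdot V^1\subset V^2$. Fix a constant $g>0$, a time-independent Coriolis parameter $f\in L^\infty(\Omega)$ and a bottom topography $b\in V^2$. The unknowns are $u(t)\in V^1$, $D(t)\in V^2$, continuously differentiable in $t$ on a time interval, coupled to a mass flux $F(t)\in V^1$ and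 a potential-vorticity flux $Q(t)$ (a square-integrable tangent vector field), specified case by case, via (M) $\frac{d}{dt}\int_\Omega w\cdot u\,dS+\int_\Omega w\cdot Q^\perp\,dS-\int_\Omega(\nabla\cdot w)\big(g(D+b)+\tfrac12|u|^2\big)dS=0$ for all $w\in V^1$; (C) $\frac{d}{dt}\int_\Omega\phi D\,dS+\int_\Omega\phi\,\nabla\cdot F\,dS=0$ for all $\phi\in V^2$. The discrete vorticity $\zeta(t)\in V^0$ is defined by $\int_\Omega\gamma\zeta\,dS=-\int_\Omega\nabla^\perp\gamma\cdot u\,dS$ for all $\gamma\in V^0$. When $D>0$, the discrete potential vorticity $q(t)\in V^0$ is defined by $\int_\Omega\gamma qD\,dS=\int_\Omega\gamma(\zeta+f)\,dS$ for all $\gamma\in V^0$. The energy-conserving mass flux is the $F(t)\in V^1$ with $\int_\Omega w\cdot F\,dS=\int_\Omega w\cdot(Du)\,dS$ for all $w\in V^1$. *)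

theory Defs
  imports "HOL-Analysis.Analysis"
begin

text \<open>Points of the surface Omega have an abstract type 'p; the area form dS is the
measure M (Omega = space M).  Tangent vectors are represented in the ambient space
real^3; k is the unit normal field, and the perp of a tangent field w is k x w.\<close>

definition sq_int :: "'p measure \<Rightarrow> ('p \<Rightarrow> 'a::{banach,second_countable_topology}) \<Rightarrow> bool" where
  "sq_int M w \<longleftrightarrow> w \<in> borel_measurable M \<and> integrable M (\<lambda>x. (norm (w x))\<^sup>2)"

definition bounded_on :: "'p measure \<Rightarrow> ('p \<Rightarrow> 'a::real_normed_vector) \<Rightarrow> bool" where
  "bounded_on M w \<longleftrightarrow> (\<exists>C. \<forall>x\<in>space M. norm (w x) \<le> C)"

definition tangent :: "'p measure \<Rightarrow> ('p \<Rightarrow> real^3) \<Rightarrow> ('p \<Rightarrow> real^3) \<Rightarrow> bool" where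
  "tangent M k w \<longleftrightarrow> (\<forall>x\<in>space M. k x \<bullet> w x = 0)"

definition perp :: "('p \<Rightarrow> real^3) \<Rightarrow> ('p \<Rightarrow> real^3) \<Rightarrow> ('p \<Rightarrow> real^3)" where
  "perp k w = (\<lambda>x. cross3 (k x) (w x))"

definition fin_span :: "('p \<Rightarrow> 'a::real_vector) set \<Rightarrow> ('p \<Rightarrow> 'a) set" where
  "fin_span B = {(\<lambda>x. \<Sum>b\<in>B. c b *\<^sub>R b x) | c. True}"

definition findim :: "('p \<Rightarrow> 'a::real_vector) set \<Rightarrow> bool" where
  "findim V \<longleftrightarrow> (\<exists>B. finite B \<and> B \<subseteq> V \<and> V = fin_span B)"

definition C1_on :: "real set \<Rightarrow> (real \<Rightarrow> real) \<Rightarrow> bool" where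
  "C1_on I c \<longleftrightarrow> (\<exists>c'. (\<forall>t\<in>I. (c has_real_derivative c' t) (at t within I)) \<and> continuous_on I c')"

definition C1_curve :: "('p \<Rightarrow> 'a::real_vector) set \<Rightarrow> real set \<Rightarrow> (real \<Rightarrow> 'p \<Rightarrow> 'a) \<Rightarrow> bool" where
  "C1_curve V I u \<longleftrightarrow>
     (\<exists>B c. finite B \<and> B \<subseteq> V \<and> (\<forall>b\<in>B. C1_on I (c b)) \<and>
            (\<forall>t\<in>I. u t = (\<lambda>x. \<Sum>b\<in>B. c b t *\<^sub>R b x)))"

text \<open>Abstract surface calculus on a closed oriented surface: Hone plays the role of
H^1(Omega) with (weak) surface gradient grad, Hdiv the role of H(div,Omega) with
(weak) surface divergence div.  The listed properties all hold on a smooth closed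
oriented Riemannian surface.\<close>

definition surface_calculus ::
  "'p measure \<Rightarrow> ('p \<Rightarrow> real^3) \<Rightarrow> ('p \<Rightarrow> real) set \<Rightarrow> (('p \<Rightarrow> real) \<Rightarrow> ('p \<Rightarrow> real^3))
   \<Rightarrow> ('p \<Rightarrow> real^3) set \<Rightarrow> (('p \<Rightarrow> real^3) \<Rightarrow> ('p \<Rightarrow> real)) \<Rightarrow> bool" where
  "surface_calculus M k Hone grad Hdiv dvg \<longleftrightarrow>
     finite_measure M \<and>
     k \<in> borel_measurable M \<and> (\<forall>x\<in>space M. norm (k x) = 1) \<and>
     \<comment> \<open>H^1: a linear space of square-integrable functions with a linear gradient\<close>
     (\<forall>\<gamma>\<in>Hone. sq_int M \<gamma> \<and> sq_int M (grad \<gamma>) \<and> tangent M k (grad \<gamma>)) \<and>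
     (\<forall>\<gamma>\<in>Hone. \<forall>\<eta>\<in>Hone. \<forall>a c::real. (\<lambda>x. a * \<gamma> x + c * \<eta> x) \<in> Hone \<and>
        (\<forall>x\<in>space M. grad (\<lambda>x. a * \<gamma> x + c * \<eta> x) x = a *\<^sub>R grad \<gamma> x + c *\<^sub>R grad \<eta> x)) \<and>
     \<comment> \<open>product rule for bounded H^1 functions\<close>
     (\<forall>\<gamma>\<in>Hone. \<forall>\<eta>\<in>Hone. bounded_on M \<gamma> \<longrightarrow> bounded_on M \<eta> \<longrightarrow>
        (\<lambda>x. \<gamma> x * \<eta> x) \<in> Hone \<and>
        (\<forall>x\<in>space M. grad (\<lambda>x. \<gamma> x * \<eta> x) x = \<gamma> x *\<^sub>R grad \<eta> x + \<eta> x *\<^sub>R grad \<gamma> x)) \<and>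
     \<comment> \<open>H(div): a linear space of square-integrable tangent fields with square-integrable divergence\<close>
     (\<forall>w\<in>Hdiv. sq_int M w \<and> tangent M k w \<and> sq_int M (dvg w)) \<and>
     (\<forall>w\<in>Hdiv. \<forall>v\<in>Hdiv. \<forall>a c::real. (\<lambda>x. a *\<^sub>R w x + c *\<^sub>R v x) \<in> Hdiv \<and>
        (\<forall>x\<in>space M. dvg (\<lambda>x. a *\<^sub>R w x + c *\<^sub>R v x) x = a * dvg w x + c * dvg v x)) \<and>
     \<comment> \<open>Green's formula on the closed surface\<close>
     (\<forall>\<gamma>\<in>Hone. \<forall>w\<in>Hdiv.
        integral\<^sup>L M (\<lambda>x. \<gamma> x * dvg w x) = - integral\<^sup>L M (\<lambda>x. grad \<gamma> x \<bullet> w x)) \<and>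
     \<comment> \<open>perp-gradients are divergence free\<close>
     (\<forall>\<gamma>\<in>Hone. perp k (grad \<gamma>) \<in> Hdiv \<and> (\<forall>x\<in>space M. dvg (perp k (grad \<gamma>)) x = 0))"

text \<open>The discrete spaces V0, V1, V2 on a mesh (a finite family of elements).
Elements of each V^i are genuine elements of L^2 (a function in V^i with zero
L^2 norm vanishes).\<close>

definition discrete_spaces ::
  "'p measure \<Rightarrow> ('p \<Rightarrow> real^3) \<Rightarrow> ('p \<Rightarrow> real) set \<Rightarrow> (('p \<Rightarrow> real) \<Rightarrow> ('p \<Rightarrow> real^3))
   \<Rightarrow> ('p \<Rightarrow> real^3) set \<Rightarrow> (('p \<Rightarrow> real^3) \<Rightarrow> ('p \<Rightarrow> real)) \<Rightarrow> 'p set set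
   \<Rightarrow> ('p \<Rightarrow> real) set \<Rightarrow> ('p \<Rightarrow> real^3) set \<Rightarrow> ('p \<Rightarrow> real) set \<Rightarrow> bool" where
  "discrete_spaces M k Hone grad Hdiv dvg mesh V0 V1 V2 \<longleftrightarrow>
     \<comment> \<open>mesh\<close>
     finite mesh \<and> (\<forall>e\<in>mesh. e \<in> sets M) \<and> \<Union>mesh = space M \<and>
     (\<forall>e1\<in>mesh. \<forall>e2\<in>mesh. e1 \<noteq> e2 \<longrightarrow> emeasure M (e1 \<inter> e2) = 0) \<and>
     \<comment> \<open>finite dimensionality\<close>
     findim V0 \<and> findim V1 \<and> findim V2 \<and>
     \<comment> \<open>V0 subset of H^1, contains constants\<close>
     V0 \<subseteq> Hone \<and> (\<forall>a::real. (\<lambda>x. a) \<in> V0) \<and>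
     (\<forall>\<gamma>\<in>V0. bounded_on M \<gamma>) \<and>
     \<comment> \<open>V1 subset of H(div)\<close>
     V1 \<subseteq> Hdiv \<and> (\<forall>w\<in>V1. bounded_on M w) \<and>
     \<comment> \<open>V2 subset of L^2, contains the element indicators\<close>
     (\<forall>\<phi>\<in>V2. sq_int M \<phi> \<and> bounded_on M \<phi>) \<and>
     (\<forall>e\<in>mesh. indicator e \<in> V2) \<and>
     \<comment> \<open>L^2 definiteness on the discrete spaces\<close>
     (\<forall>\<gamma>\<in>V0. integral\<^sup>L M (\<lambda>x. (\<gamma> x)\<^sup>2) = 0 \<longrightarrow> (\<forall>x\<in>space M. \<gamma> x = 0)) \<and>
     (\<forall>w\<in>V1. integral\<^sup>L M (\<lambda>x. w x \<bullet> w x) = 0 \<longrightarrow> (\<forall>x\<in>space M. w x = 0)) \<and>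
     (\<forall>\<phi>\<in>V2. integral\<^sup>L M (\<lambda>x. (\<phi> x)\<^sup>2) = 0 \<longrightarrow> (\<forall>x\<in>space M. \<phi> x = 0)) \<and>
     \<comment> \<open>compatibility: perp-grad V0 in V1 and div V1 in V2\<close>
     (\<forall>\<gamma>\<in>V0. perp k (grad \<gamma>) \<in> V1) \<and> (\<forall>w\<in>V1. dvg w \<in> V2)"

definition energy :: "'p measure \<Rightarrow> real \<Rightarrow> ('p \<Rightarrow> real) \<Rightarrow> ('p \<Rightarrow> real^3) \<Rightarrow> ('p \<Rightarrow> real) \<Rightarrow> real" where
  "energy M g b u D = integral\<^sup>L M (\<lambda>x. D x * (norm (u x))\<^sup>2 / 2 + g * ((D x)\<^sup>2 / 2 + b x * D x))"

definition enstrophy :: "'p measure \<Rightarrow> ('p \<Rightarrow> real) \<Rightarrow> ('p \<Rightarrow> real) \<Rightarrow> real" where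
  "enstrophy M q D = integral\<^sup>L M (\<lambda>x. (q x)\<^sup>2 * D x)"

definition is_disc_vorticity ::
  "'p measure \<Rightarrow> ('p \<Rightarrow> real^3) \<Rightarrow> (('p \<Rightarrow> real) \<Rightarrow> ('p \<Rightarrow> real^3)) \<Rightarrow> ('p \<Rightarrow> real) set
   \<Rightarrow> ('p \<Rightarrow> real^3) \<Rightarrow> ('p \<Rightarrow> real) \<Rightarrow> bool" where
  "is_disc_vorticity M k grad V0 u \<zeta> \<longleftrightarrow> \<zeta> \<in> V0 \<and>
     (\<forall>\<gamma>\<in>V0. integral\<^sup>L M (\<lambda>x. \<gamma> x * \<zeta> x) = - integral\<^sup>L M (\<lambda>x. perp k (grad \<gamma>) x \<bullet> u x))"

definition is_disc_pv ::
  "'p measure \<Rightarrow> ('p \<Rightarrow> real) set \<Rightarrow> ('p \<Rightarrow> real) \<Rightarrow> ('p \<Rightarrow> real) \<Rightarrow> ('p \<Rightarrow> real)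
   \<Rightarrow> ('p \<Rightarrow> real) \<Rightarrow> bool" where
  "is_disc_pv M V0 f D \<zeta> q \<longleftrightarrow> q \<in> V0 \<and>
     (\<forall>\<gamma>\<in>V0. integral\<^sup>L M (\<lambda>x. \<gamma> x * q x * D x) = integral\<^sup>L M (\<lambda>x. \<gamma> x * (\<zeta> x + f x)))"

end

theory Submission
  imports Defs "Jordan_Normal_Form.Determinant"
begin

(*
  Differentiating under the integral, E' = int (Ddot Phi + D u.udot) with
  Phi = |u|^2/2 + g (D + b).  Testing the continuity equation with the V2-function
  Ddot + div F and using L2-definiteness on V2 gives Ddot = -div F pointwise.  The
  projection property of F turns int D u.udot into int F.udot, and the momentum
  equation tested with w = F evaluates this to -int F.Q^perp + int Phi div F.  Hence
  E' = -int F.Q^perp, which vanishes when Q is a scalar multiple of F.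

  The potential vorticity q is only defined implicitly, so it is not
  assumed differentiable.  Fixing t, we split Z(s) = R_t(s) + e_t(s), where R_t(s) is
  an explicit expression in u_s and D_s with derivative 0 at t (by the momentum
  equation tested with perp grad q_t, Green's formula for q_t^2, and
  (k x a).(k x b) = a.b for tangent a, b), and e_t(s) = int (q_s - q_t)^2 D_s.  The
  coefficients of q_s - q_t in a basis of V0 solve a linear system with the
  D_s-weighted Gram matrix and a right-hand side that is differentiable in s and
  vanishes at t; by Cramer's rule they tend to 0, hence e_t(s) = o(s - t).
*)

text \<open>Determinants are taken from Jordan_Normal_Form, whose notation for scalar
  products and vector entries would clash with the inner product and the vector
  components of HOL-Analysis used in the definitions.\<close>

no_notation Matrix.scalar_prod (infix "\<bullet>" 70)
no_notation Matrix.vec_index (infixl "$" 100)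


section \<open>Bounded measurable functions\<close>

text \<open>All fields occurring in the semi-discrete equations are bounded and measurable,
  hence integrable on the finite measure space of the surface, and this class is
  closed under the algebraic operations used below.\<close>

definition bdd_meas :: "'p measure \<Rightarrow> ('p \<Rightarrow> 'a::real_normed_vector) \<Rightarrow> bool" where
  "bdd_meas M \<phi> \<longleftrightarrow> \<phi> \<in> borel_measurable M \<and> bounded_on M \<phi>"

lemma bdd_meas_cong:
  "bdd_meas M \<phi> \<Longrightarrow> (\<And>x. x \<in> space M \<Longrightarrow> \<phi> x = \<psi> x) \<Longrightarrow> bdd_meas M \<psi>"
  unfolding bdd_meas_def bounded_on_def by (metis (no_types, lifting) measurable_cong)

lemma bdd_meas_const: "bdd_meas M (\<lambda>x. c)"
  unfolding bdd_meas_def bounded_on_def by auto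

lemma bdd_meas_add:
  fixes \<phi> \<psi> :: "'p \<Rightarrow> real"
  assumes "bdd_meas M \<phi>" "bdd_meas M \<psi>"
  shows "bdd_meas M (\<lambda>x. \<phi> x + \<psi> x)"
proof -
  obtain C1 C2 where "\<forall>x\<in>space M. norm (\<phi> x) \<le> C1" "\<forall>x\<in>space M. norm (\<psi> x) \<le> C2"
    using assms unfolding bdd_meas_def bounded_on_def by blast
  then have "\<forall>x\<in>space M. norm (\<phi> x + \<psi> x) \<le> C1 + C2" by (smt (verit) real_norm_def)
  then show ?thesis using assms unfolding bdd_meas_def bounded_on_def by auto
qed

lemma bdd_meas_mult:
  fixes \<phi> \<psi> :: "'p \<Rightarrow> real"
  assumes "bdd_meas M \<phi>" "bdd_meas M \<psi>"
  shows "bdd_meas M (\<lambda>x. \<phi> x * \<psi> x)"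
proof -
  obtain C1 C2 where "\<forall>x\<in>space M. norm (\<phi> x) \<le> C1" "\<forall>x\<in>space M. norm (\<psi> x) \<le> C2"
    using assms unfolding bdd_meas_def bounded_on_def by blast
  then have "\<forall>x\<in>space M. norm (\<phi> x * \<psi> x) \<le> C1 * C2" by (simp add: abs_mult mult_mono')
  then show ?thesis using assms unfolding bdd_meas_def bounded_on_def by auto
qed

lemma bdd_meas_diff:
  fixes \<phi> \<psi> :: "'p \<Rightarrow> real"
  assumes "bdd_meas M \<phi>" "bdd_meas M \<psi>"
  shows "bdd_meas M (\<lambda>x. \<phi> x - \<psi> x)"
proof -
  have "bdd_meas M (\<lambda>x. \<phi> x + (-1) * \<psi> x)"
    using assms by (intro bdd_meas_add bdd_meas_mult bdd_meas_const)
  then show ?thesis by (rule bdd_meas_cong) simp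
qed

lemma bdd_meas_sum:
  fixes \<phi> :: "'i \<Rightarrow> 'p \<Rightarrow> real"
  shows "finite S \<Longrightarrow> (\<And>i. i \<in> S \<Longrightarrow> bdd_meas M (\<phi> i)) \<Longrightarrow> bdd_meas M (\<lambda>x. \<Sum>i\<in>S. \<phi> i x)"
  by (induction S rule: finite_induct) (auto intro: bdd_meas_add bdd_meas_const)

lemma bdd_meas_integrable:
  fixes \<phi> :: "'p \<Rightarrow> real"
  shows "finite_measure M \<Longrightarrow> bdd_meas M \<phi> \<Longrightarrow> integrable M \<phi>"
  unfolding bdd_meas_def bounded_on_def by (metis AE_I2 finite_measure.integrable_const_bound)

lemma bdd_meas_inner:
  fixes v w :: "'p \<Rightarrow> 'a::euclidean_space"
  assumes "bdd_meas M v" "bdd_meas M w"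
  shows "bdd_meas M (\<lambda>x. v x \<bullet> w x)"
proof -
  obtain C1 C2 where "\<forall>x\<in>space M. norm (v x) \<le> C1" "\<forall>x\<in>space M. norm (w x) \<le> C2"
    using assms unfolding bdd_meas_def bounded_on_def by blast
  then have "\<forall>x\<in>space M. norm (v x \<bullet> w x) \<le> C1 * C2"
    by (smt (verit) mult_mono' Cauchy_Schwarz_ineq2 norm_ge_zero real_norm_def)
  then show ?thesis using assms unfolding bdd_meas_def bounded_on_def by auto
qed

lemma bdd_meas_component:
  fixes w :: "'p \<Rightarrow> real^'n"
  assumes "bdd_meas M w"
  shows "bdd_meas M (\<lambda>x. w x $ l)"
proof -
  have "bdd_meas M (\<lambda>x. w x \<bullet> axis l 1)"
    using assms bdd_meas_const by (rule bdd_meas_inner)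
  then show ?thesis by (simp add: inner_axis)
qed


section \<open>Time families with separated variables\<close>

text \<open>A family h(s, x) has a separated-variable derivative h' at time t if, for s in I
  and x on the surface, it is a finite sum of products m(s) phi(x) of time coefficients
  differentiable at t and bounded measurable spatial factors; h' is then the sum of
  the products m'(t) phi(x).  Such families are closed under sums and products and
  can be differentiated under the integral, which is all the calculus the
  semi-discrete fields (finite combinations of basis functions) require.\<close>

definition has_sep_derivative ::
  "'p measure \<Rightarrow> real set \<Rightarrow> real \<Rightarrow> (real \<Rightarrow> 'p \<Rightarrow> real) \<Rightarrow> ('p \<Rightarrow> real) \<Rightarrow> bool" where
  "has_sep_derivative M I t h h' \<longleftrightarrow>
     (\<exists>L. (\<forall>(m,m',\<phi>)\<in>set L. (m has_real_derivative m') (at t within I) \<and> bdd_meas M \<phi>) \<and>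
          (\<forall>s\<in>I. \<forall>x\<in>space M. h s x = (\<Sum>(m,m',\<phi>)\<leftarrow>L. m s * \<phi> x)) \<and>
          (\<forall>x\<in>space M. h' x = (\<Sum>(m,m',\<phi>)\<leftarrow>L. m' * \<phi> x)))"

lemma has_sep_derivative_cong:
  "has_sep_derivative M I t h h' \<Longrightarrow> (\<And>s x. s \<in> I \<Longrightarrow> x \<in> space M \<Longrightarrow> h s x = k s x) \<Longrightarrow>
   (\<And>x. x \<in> space M \<Longrightarrow> h' x = k' x) \<Longrightarrow> has_sep_derivative M I t k k'"
  unfolding has_sep_derivative_def by metis

lemma has_sep_derivative_zero: "has_sep_derivative M I t (\<lambda>s x. 0) (\<lambda>x. 0)"
  unfolding has_sep_derivative_def by (intro exI[of _ "[]"]) auto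

lemma has_sep_derivative_product:
  "(c has_real_derivative c') (at t within I) \<Longrightarrow> bdd_meas M \<phi> \<Longrightarrow>
   has_sep_derivative M I t (\<lambda>s x. c s * \<phi> x) (\<lambda>x. c' * \<phi> x)"
  unfolding has_sep_derivative_def by (intro exI[of _ "[(c,c',\<phi>)]"]) auto

lemma has_sep_derivative_const:
  "bdd_meas M \<phi> \<Longrightarrow> has_sep_derivative M I t (\<lambda>s x. \<phi> x) (\<lambda>x. 0)"
  using has_sep_derivative_product[of "\<lambda>s. 1" 0 t I M \<phi>] by simp

lemma has_sep_derivative_add:
  assumes "has_sep_derivative M I t h h'" "has_sep_derivative M I t k k'"
  shows "has_sep_derivative M I t (\<lambda>s x. h s x + k s x) (\<lambda>x. h' x + k' x)"
proof -
  obtain L1 L2 where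
    "\<forall>(m,m',\<phi>)\<in>set L1. (m has_real_derivative m') (at t within I) \<and> bdd_meas M \<phi>"
    "\<forall>s\<in>I. \<forall>x\<in>space M. h s x = (\<Sum>(m,m',\<phi>)\<leftarrow>L1. m s * \<phi> x)"
    "\<forall>x\<in>space M. h' x = (\<Sum>(m,m',\<phi>)\<leftarrow>L1. m' * \<phi> x)"
    "\<forall>(m,m',\<phi>)\<in>set L2. (m has_real_derivative m') (at t within I) \<and> bdd_meas M \<phi>"
    "\<forall>s\<in>I. \<forall>x\<in>space M. k s x = (\<Sum>(m,m',\<phi>)\<leftarrow>L2. m s * \<phi> x)"
    "\<forall>x\<in>space M. k' x = (\<Sum>(m,m',\<phi>)\<leftarrow>L2. m' * \<phi> x)"
    using assms unfolding has_sep_derivative_def by blast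
  then show ?thesis
    unfolding has_sep_derivative_def by (intro exI[of _ "L1 @ L2"]) auto
qed

lemma has_sep_derivative_sum:
  "finite S \<Longrightarrow> (\<And>i. i \<in> S \<Longrightarrow> has_sep_derivative M I t (h i) (h' i)) \<Longrightarrow>
   has_sep_derivative M I t (\<lambda>s x. \<Sum>i\<in>S. h i s x) (\<lambda>x. \<Sum>i\<in>S. h' i x)"
proof (induction S rule: finite_induct)
  case empty
  then show ?case by (simp add: has_sep_derivative_zero)
next
  case (insert a S)
  then have "has_sep_derivative M I t (\<lambda>s x. h a s x + (\<Sum>i\<in>S. h i s x))
      (\<lambda>x. h' a x + (\<Sum>i\<in>S. h' i x))"
    by (intro has_sep_derivative_add) auto
  then show ?case using insert by simp
qed

lemma has_sep_derivative_mult_term: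
  assumes t: "t \<in> I" and c: "(c has_real_derivative c') (at t within I)" and \<phi>: "bdd_meas M \<phi>"
    and k: "has_sep_derivative M I t k k'"
  shows "has_sep_derivative M I t (\<lambda>s x. c s * \<phi> x * k s x)
           (\<lambda>x. c' * \<phi> x * k t x + c t * \<phi> x * k' x)"
proof -
  from k obtain L where L:
    "\<forall>(m,m',\<psi>)\<in>set L. (m has_real_derivative m') (at t within I) \<and> bdd_meas M \<psi>"
    "\<forall>s\<in>I. \<forall>x\<in>space M. k s x = (\<Sum>(m,m',\<psi>)\<leftarrow>L. m s * \<psi> x)"
    "\<forall>x\<in>space M. k' x = (\<Sum>(m,m',\<psi>)\<leftarrow>L. m' * \<psi> x)"
    unfolding has_sep_derivative_def by blast
  define L' where
    "L' = map (\<lambda>(m,m',\<psi>). (\<lambda>s. c s * m s, c t * m' + c' * m t, \<lambda>x. \<phi> x * \<psi> x)) L"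
  have terms: "\<forall>(m,m',\<psi>)\<in>set L'. (m has_real_derivative m') (at t within I) \<and> bdd_meas M \<psi>"
    using L(1) c \<phi> unfolding L'_def by (auto intro!: DERIV_mult' bdd_meas_mult)
  have value_eq: "(\<Sum>(m,m',\<psi>)\<leftarrow>L'. m s * \<psi> x) = c s * \<phi> x * (\<Sum>(m,m',\<psi>)\<leftarrow>L. m s * \<psi> x)"
    for s x
    unfolding L'_def by (induction L) (auto simp: algebra_simps)
  have deriv_eq: "(\<Sum>(m,m',\<psi>)\<leftarrow>L'. m' * \<psi> x) = c' * \<phi> x * (\<Sum>(m,m',\<psi>)\<leftarrow>L. m t * \<psi> x)
      + c t * \<phi> x * (\<Sum>(m,m',\<psi>)\<leftarrow>L. m' * \<psi> x)" for x
    unfolding L'_def by (induction L) (auto simp: algebra_simps)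
  show ?thesis unfolding has_sep_derivative_def
    by (intro exI[of _ L'] conjI terms) (use L t value_eq deriv_eq in auto)
qed

lemma has_sep_derivative_mult:
  assumes t: "t \<in> I" and h: "has_sep_derivative M I t h h'" and k: "has_sep_derivative M I t k k'"
  shows "has_sep_derivative M I t (\<lambda>s x. h s x * k s x) (\<lambda>x. h' x * k t x + h t x * k' x)"
proof -
  from h obtain L where L:
    "\<forall>(m,m',\<psi>)\<in>set L. (m has_real_derivative m') (at t within I) \<and> bdd_meas M \<psi>"
    "\<forall>s\<in>I. \<forall>x\<in>space M. h s x = (\<Sum>(m,m',\<psi>)\<leftarrow>L. m s * \<psi> x)"
    "\<forall>x\<in>space M. h' x = (\<Sum>(m,m',\<psi>)\<leftarrow>L. m' * \<psi> x)"
    unfolding has_sep_derivative_def by blast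
  have "has_sep_derivative M I t (\<lambda>s x. (\<Sum>(m,m',\<psi>)\<leftarrow>L. m s * \<psi> x) * k s x)
     (\<lambda>x. (\<Sum>(m,m',\<psi>)\<leftarrow>L. m' * \<psi> x) * k t x + (\<Sum>(m,m',\<psi>)\<leftarrow>L. m t * \<psi> x) * k' x)"
    using L(1)
  proof (induction L)
    case Nil
    then show ?case by (simp add: has_sep_derivative_zero)
  next
    case (Cons a L)
    obtain m m' \<psi> where a: "a = (m,m',\<psi>)" by (cases a)
    have "has_sep_derivative M I t
        (\<lambda>s x. m s * \<psi> x * k s x + (\<Sum>(m,m',\<psi>)\<leftarrow>L. m s * \<psi> x) * k s x)
        (\<lambda>x. (m' * \<psi> x * k t x + m t * \<psi> x * k' x) + ((\<Sum>(m,m',\<psi>)\<leftarrow>L. m' * \<psi> x) * k t x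
           + (\<Sum>(m,m',\<psi>)\<leftarrow>L. m t * \<psi> x) * k' x))"
      using Cons a by (intro has_sep_derivative_add has_sep_derivative_mult_term t k) auto
    then show ?case
      unfolding a by (rule has_sep_derivative_cong) (auto simp: algebra_simps)
  qed
  then show ?thesis by (rule has_sep_derivative_cong) (use L t in auto)
qed

lemma integral_sum_list:
  assumes "\<forall>l\<in>set L. integrable M (f l)"
  shows "(\<integral>x. (\<Sum>l\<leftarrow>L. f l x) \<partial>M) = (\<Sum>l\<leftarrow>L. \<integral>x. f l x \<partial>M)"
proof -
  have "integrable M (\<lambda>x. \<Sum>l\<leftarrow>L. f l x) \<and> (\<integral>x. (\<Sum>l\<leftarrow>L. f l x) \<partial>M) = (\<Sum>l\<leftarrow>L. \<integral>x. f l x \<partial>M)"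
    using assms by (induction L) auto
  then show ?thesis ..
qed

lemma has_sep_derivative_integral:
  assumes fm: "finite_measure M" and t: "t \<in> I" and h: "has_sep_derivative M I t h h'"
  shows "((\<lambda>s. \<integral>x. h s x \<partial>M) has_real_derivative (\<integral>x. h' x \<partial>M)) (at t within I)"
proof -
  from h obtain L where L:
    "\<forall>(m,m',\<psi>)\<in>set L. (m has_real_derivative m') (at t within I) \<and> bdd_meas M \<psi>"
    "\<forall>s\<in>I. \<forall>x\<in>space M. h s x = (\<Sum>(m,m',\<psi>)\<leftarrow>L. m s * \<psi> x)"
    "\<forall>x\<in>space M. h' x = (\<Sum>(m,m',\<psi>)\<leftarrow>L. m' * \<psi> x)"
    unfolding has_sep_derivative_def by blast
  have int: "integrable M \<psi>" if "(m,m',\<psi>) \<in> set L" for m m' \<psi>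
    using L(1) that fm bdd_meas_integrable by fastforce
  have value_eq: "(\<integral>x. h s x \<partial>M) = (\<Sum>(m,m',\<psi>)\<leftarrow>L. m s * (\<integral>x. \<psi> x \<partial>M))" if "s \<in> I" for s
  proof -
    have "(\<integral>x. h s x \<partial>M) = (\<integral>x. (\<Sum>l\<leftarrow>L. fst l s * snd (snd l) x) \<partial>M)"
      using L(2) that by (intro Bochner_Integration.integral_cong) (auto simp: split_def)
    also have "\<dots> = (\<Sum>l\<leftarrow>L. \<integral>x. fst l s * snd (snd l) x \<partial>M)"
      using int by (intro integral_sum_list) (auto simp: split_def)
    finally show ?thesis by (simp add: split_def)
  qed
  have deriv: "(\<integral>x. h' x \<partial>M) = (\<Sum>(m,m',\<psi>)\<leftarrow>L. m' * (\<integral>x. \<psi> x \<partial>M))"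
  proof -
    have "(\<integral>x. h' x \<partial>M) = (\<integral>x. (\<Sum>l\<leftarrow>L. fst (snd l) * snd (snd l) x) \<partial>M)"
      using L(3) by (intro Bochner_Integration.integral_cong) (auto simp: split_def)
    also have "\<dots> = (\<Sum>l\<leftarrow>L. \<integral>x. fst (snd l) * snd (snd l) x \<partial>M)"
      using int by (intro integral_sum_list) (auto simp: split_def)
    finally show ?thesis by (simp add: split_def)
  qed
  have "((\<lambda>s. (\<Sum>(m,m',\<psi>)\<leftarrow>L. m s * (\<integral>x. \<psi> x \<partial>M))) has_real_derivative
      (\<Sum>(m,m',\<psi>)\<leftarrow>L. m' * (\<integral>x. \<psi> x \<partial>M))) (at t within I)"
    using L(1)
  proof (induction L)
    case Nil
    then show ?case by simp
  next
    case (Cons a L)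
    then show ?case by (cases a) (auto intro!: DERIV_add DERIV_cmult_right)
  qed
  then show ?thesis unfolding deriv
    by (rule has_field_derivative_transform_within[where d=1]) (auto simp: value_eq t)
qed


section \<open>Finite-dimensional function spaces\<close>

lemma findim_zero: "findim V \<Longrightarrow> (\<lambda>x. 0) \<in> V"
  unfolding findim_def fin_span_def by (auto intro!: exI[of _ "\<lambda>_. 0"])

lemma findim_add:
  assumes "findim V" "\<phi> \<in> V" "\<psi> \<in> V"
  shows "(\<lambda>x. \<phi> x + \<psi> x) \<in> V"
proof -
  obtain B where B: "V = fin_span B" using assms(1) unfolding findim_def by blast
  then obtain c1 c2 where "\<phi> = (\<lambda>x. \<Sum>b\<in>B. c1 b *\<^sub>R b x)" "\<psi> = (\<lambda>x. \<Sum>b\<in>B. c2 b *\<^sub>R b x)"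
    using assms(2,3) unfolding fin_span_def by auto
  then have "(\<lambda>x. \<phi> x + \<psi> x) = (\<lambda>x. \<Sum>b\<in>B. (c1 b + c2 b) *\<^sub>R b x)"
    by (simp add: sum.distrib scaleR_add_left)
  then show ?thesis using B unfolding fin_span_def by auto
qed

lemma findim_scale:
  assumes "findim V" "\<phi> \<in> V"
  shows "(\<lambda>x. a *\<^sub>R \<phi> x) \<in> V"
proof -
  obtain B where B: "V = fin_span B" using assms(1) unfolding findim_def by blast
  then obtain c where "\<phi> = (\<lambda>x. \<Sum>b\<in>B. c b *\<^sub>R b x)"
    using assms(2) unfolding fin_span_def by auto
  then have "(\<lambda>x. a *\<^sub>R \<phi> x) = (\<lambda>x. \<Sum>b\<in>B. (a * c b) *\<^sub>R b x)"
    by (simp add: scaleR_sum_right)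
  then show ?thesis using B unfolding fin_span_def by auto
qed

lemma findim_sum:
  assumes V: "findim V"
  shows "finite S \<Longrightarrow> (\<And>i. i \<in> S \<Longrightarrow> h i \<in> V) \<Longrightarrow> (\<lambda>x. \<Sum>i\<in>S. a i *\<^sub>R h i x) \<in> V"
proof (induction S rule: finite_induct)
  case empty
  then show ?case by (simp add: findim_zero[OF V])
next
  case (insert j S)
  then have "(\<lambda>x. a j *\<^sub>R h j x + (\<Sum>i\<in>S. a i *\<^sub>R h i x)) \<in> V"
    by (intro findim_add[OF V] findim_scale[OF V]) auto
  then show ?case using insert by simp
qed

lemma minimal_spanning_subset:
  fixes B0 :: "('p \<Rightarrow> real) set"
  assumes fin: "finite B0" and span: "\<forall>\<gamma>\<in>V. \<exists>y. \<forall>x\<in>S. \<gamma> x = (\<Sum>\<beta>\<in>B0. y \<beta> * \<beta> x)"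
  obtains B where "B \<subseteq> B0" "\<forall>\<gamma>\<in>V. \<exists>y. \<forall>x\<in>S. \<gamma> x = (\<Sum>\<beta>\<in>B. y \<beta> * \<beta> x)"
    "\<forall>y. (\<forall>x\<in>S. (\<Sum>\<beta>\<in>B. y \<beta> * \<beta> x) = 0) \<longrightarrow> (\<forall>\<beta>\<in>B. y \<beta> = 0)"
proof -
  define P where "P B \<longleftrightarrow> B \<subseteq> B0 \<and> (\<forall>\<gamma>\<in>V. \<exists>y. \<forall>x\<in>S. \<gamma> x = (\<Sum>\<beta>\<in>B. y \<beta> * \<beta> x))" for B
  have "P B0" using span unfolding P_def by auto
  then obtain B where PB: "P B" and minB: "\<forall>B'. P B' \<longrightarrow> card B \<le> card B'"
    using ex_has_least_nat[of P B0 card] by blast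
  have finB: "finite B" using PB fin unfolding P_def by (auto intro: finite_subset)
  have "\<forall>\<beta>\<in>B. y \<beta> = 0" if y: "\<forall>x\<in>S. (\<Sum>\<beta>\<in>B. y \<beta> * \<beta> x) = 0" for y
  proof (rule ccontr)
    assume "\<not> (\<forall>\<beta>\<in>B. y \<beta> = 0)"
    then obtain \<beta>0 where \<beta>0: "\<beta>0 \<in> B" "y \<beta>0 \<noteq> 0" by auto
    define B' where "B' = B - {\<beta>0}"
    have split: "(\<Sum>\<beta>\<in>B. h \<beta>) = h \<beta>0 + (\<Sum>\<beta>\<in>B'. h \<beta>)" for h :: "('p \<Rightarrow> real) \<Rightarrow> real"
      unfolding B'_def using finB \<beta>0 by (simp add: sum.remove)
    have \<beta>0_comb: "\<beta>0 x = (\<Sum>\<beta>\<in>B'. (- y \<beta> / y \<beta>0) * \<beta> x)" if "x \<in> S" for x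
    proof -
      have "y \<beta>0 * \<beta>0 x + (\<Sum>\<beta>\<in>B'. y \<beta> * \<beta> x) = 0"
        using y that split[of "\<lambda>\<beta>. y \<beta> * \<beta> x"] by simp
      then have "\<beta>0 x = - (\<Sum>\<beta>\<in>B'. y \<beta> * \<beta> x) / y \<beta>0" using \<beta>0 by (simp add: field_simps)
      then show ?thesis by (simp add: sum_divide_distrib sum_negf[symmetric])
    qed
    have "P B'"
      unfolding P_def
    proof (intro conjI ballI)
      show "B' \<subseteq> B0" using PB unfolding P_def B'_def by auto
      fix \<gamma> assume "\<gamma> \<in> V"
      then obtain z where z: "\<forall>x\<in>S. \<gamma> x = (\<Sum>\<beta>\<in>B. z \<beta> * \<beta> x)" using PB unfolding P_def by blast
      show "\<exists>y. \<forall>x\<in>S. \<gamma> x = (\<Sum>\<beta>\<in>B'. y \<beta> * \<beta> x)"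
      proof (intro exI[of _ "\<lambda>\<beta>. z \<beta> + z \<beta>0 * (- y \<beta> / y \<beta>0)"] ballI)
        fix x assume x: "x \<in> S"
        have "\<gamma> x = z \<beta>0 * \<beta>0 x + (\<Sum>\<beta>\<in>B'. z \<beta> * \<beta> x)"
          using z x split[of "\<lambda>\<beta>. z \<beta> * \<beta> x"] by simp
        also have "\<dots> = (\<Sum>\<beta>\<in>B'. z \<beta>0 * ((- y \<beta> / y \<beta>0) * \<beta> x) + z \<beta> * \<beta> x)"
          by (simp only: \<beta>0_comb[OF x] sum.distrib sum_distrib_left)
        also have "\<dots> = (\<Sum>\<beta>\<in>B'. (z \<beta> + z \<beta>0 * (- y \<beta> / y \<beta>0)) * \<beta> x)"
          by (rule sum.cong) (auto simp: algebra_simps)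
        finally show "\<gamma> x = (\<Sum>\<beta>\<in>B'. (z \<beta> + z \<beta>0 * (- y \<beta> / y \<beta>0)) * \<beta> x)" .
      qed
    qed
    moreover have "card B' < card B" unfolding B'_def using finB \<beta>0 by (meson card_Diff1_less)
    ultimately show False using minB by fastforce
  qed
  then show ?thesis using that PB unfolding P_def by blast
qed

lemma findim_indexed_basis:
  fixes V :: "('p \<Rightarrow> real) set"
  assumes "findim V"
  obtains n and \<beta> :: "nat \<Rightarrow> 'p \<Rightarrow> real" where "\<And>i. i < n \<Longrightarrow> \<beta> i \<in> V"
    "\<And>\<gamma>. \<gamma> \<in> V \<Longrightarrow> \<exists>y. \<forall>x\<in>S. \<gamma> x = (\<Sum>i<n. y i * \<beta> i x)"
    "\<And>y. \<forall>x\<in>S. (\<Sum>i<n. y i * \<beta> i x) = 0 \<Longrightarrow> \<forall>i<n. y i = 0"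
proof -
  obtain B0 where B0: "finite B0" "B0 \<subseteq> V" "V = fin_span B0"
    using assms unfolding findim_def by auto
  have "\<forall>\<gamma>\<in>V. \<exists>y. \<forall>x\<in>S. \<gamma> x = (\<Sum>\<beta>\<in>B0. y \<beta> * \<beta> x)"
    using B0(3) unfolding fin_span_def by auto
  then obtain B where B: "B \<subseteq> B0" "\<forall>\<gamma>\<in>V. \<exists>y. \<forall>x\<in>S. \<gamma> x = (\<Sum>\<beta>\<in>B. y \<beta> * \<beta> x)"
    "\<forall>y. (\<forall>x\<in>S. (\<Sum>\<beta>\<in>B. y \<beta> * \<beta> x) = 0) \<longrightarrow> (\<forall>\<beta>\<in>B. y \<beta> = 0)"
    using minimal_spanning_subset[OF B0(1)] by blast
  have "finite B" using B(1) B0(1) finite_subset by auto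
  then obtain \<beta> where bij: "bij_betw \<beta> {..<card B} B"
    using ex_bij_betw_nat_finite by (metis atLeast0LessThan)
  have reindex: "(\<Sum>b\<in>B. h b) = (\<Sum>i<card B. h (\<beta> i))" for h :: "('p \<Rightarrow> real) \<Rightarrow> real"
    using sum.reindex_bij_betw[OF bij, of h] by simp
  show ?thesis
  proof (rule that[of "card B" \<beta>])
    show "\<beta> i \<in> V" if "i < card B" for i
      using bij that B(1) B0(2) unfolding bij_betw_def by auto
    show "\<exists>y. \<forall>x\<in>S. \<gamma> x = (\<Sum>i<card B. y i * \<beta> i x)" if "\<gamma> \<in> V" for \<gamma>
    proof -
      obtain y where "\<forall>x\<in>S. \<gamma> x = (\<Sum>b\<in>B. y b * b x)" using B(2) \<open>\<gamma> \<in> V\<close> by blast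
      then show ?thesis by (intro exI[of _ "\<lambda>i. y (\<beta> i)"]) (simp add: reindex)
    qed
    show "\<forall>i<card B. y i = 0" if y: "\<forall>x\<in>S. (\<Sum>i<card B. y i * \<beta> i x) = 0" for y
    proof -
      define y' where "y' = y \<circ> the_inv_into {..<card B} \<beta>"
      have y'_\<beta>: "y' (\<beta> i) = y i" if "i < card B" for i
        unfolding y'_def using bij that by (simp add: bij_betw_def the_inv_into_f_f)
      have "\<forall>x\<in>S. (\<Sum>b\<in>B. y' b * b x) = 0" using y by (simp add: reindex y'_\<beta>)
      then have "\<forall>b\<in>B. y' b = 0" using B(3) by blast
      then show ?thesis using y'_\<beta> bij_betwE[OF bij] by auto
    qed
  qed
qed


section \<open>Continuous dependence of solutions of linear systems\<close>

text \<open>The determinant is continuous in the matrix entries (Leibniz formula).\<close>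

lemma det_tendsto:
  fixes A :: "'b \<Rightarrow> real mat"
  assumes A: "\<And>s. A s \<in> carrier_mat n n" and A0: "A0 \<in> carrier_mat n n"
    and lim: "\<And>i j. i < n \<Longrightarrow> j < n \<Longrightarrow> ((\<lambda>s. A s $$ (i,j)) \<longlongrightarrow> A0 $$ (i,j)) F"
  shows "((\<lambda>s. det (A s)) \<longlongrightarrow> det A0) F"
proof -
  have "((\<lambda>s. (\<Sum>p | p permutes {0..<n}. of_int (sign p) * (\<Prod>i = 0..<n. A s $$ (i, p i))))
     \<longlongrightarrow> (\<Sum>p | p permutes {0..<n}. of_int (sign p) * (\<Prod>i = 0..<n. A0 $$ (i, p i)))) F"
  proof (intro tendsto_sum tendsto_mult tendsto_const tendsto_prod)
    fix p i assume "p \<in> {p. p permutes {0..<n}}" "i \<in> {0..<n}"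
    then have "p i < n" "i < n" using permutes_in_image by fastforce+
    then show "((\<lambda>s. A s $$ (i, p i)) \<longlongrightarrow> A0 $$ (i, p i)) F" by (rule lim[rotated])
  qed
  then show ?thesis using det_def'[OF A] det_def'[OF A0] by simp
qed

text \<open>If the coefficient matrices converge to an invertible matrix and the
  right-hand sides converge, the solutions converge (Cramer's rule).\<close>

lemma linear_system_solution_tendsto:
  fixes A :: "'b \<Rightarrow> real mat" and L :: "'b \<Rightarrow> real vec" and y :: "'b \<Rightarrow> nat \<Rightarrow> real"
  assumes A: "\<And>s. A s \<in> carrier_mat n n" and A0: "A0 \<in> carrier_mat n n" and det0: "det A0 \<noteq> 0"
    and A_lim: "\<And>i j. i < n \<Longrightarrow> j < n \<Longrightarrow> ((\<lambda>s. A s $$ (i,j)) \<longlongrightarrow> A0 $$ (i,j)) F"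
    and L_lim: "\<And>i. i < n \<Longrightarrow> ((\<lambda>s. vec_index (L s) i) \<longlongrightarrow> vec_index L0 i) F"
    and sol: "eventually (\<lambda>s. A s *\<^sub>v vec n (y s) = L s) F"
    and sol0: "A0 *\<^sub>v vec n y0 = L0" and i: "i < n"
  shows "((\<lambda>s. y s i) \<longlongrightarrow> y0 i) F"
proof -
  have dims: "dim_row (A s) = n" "dim_col (A s) = n" "dim_row A0 = n" "dim_col A0 = n" for s
    using A[of s] A0 by auto
  have R: "replace_col B b i \<in> carrier_mat n n" if "B \<in> carrier_mat n n" for B b
    using that by (auto simp: replace_col_def)
  have num: "((\<lambda>s. det (replace_col (A s) (L s) i)) \<longlongrightarrow> det (replace_col A0 L0 i)) F"
  proof (rule det_tendsto[OF R[OF A] R[OF A0]])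
    fix a b assume "a < n" "b < n"
    then show "((\<lambda>s. replace_col (A s) (L s) i $$ (a, b)) \<longlongrightarrow> replace_col A0 L0 i $$ (a, b)) F"
      using A_lim L_lim by (cases "b = i") (auto simp: replace_col_def dims)
  qed
  have den: "((\<lambda>s. det (A s)) \<longlongrightarrow> det A0) F"
    using A A0 A_lim by (rule det_tendsto)
  have "det (replace_col A0 L0 i) = y0 i * det A0"
    using cramer_lemma_mat[OF A0 _ i, of "vec n y0"] i by (simp add: sol0)
  then have "((\<lambda>s. det (replace_col (A s) (L s) i) / det (A s)) \<longlongrightarrow> y0 i) F"
    using tendsto_divide[OF num den det0] det0 by simp
  moreover have "eventually (\<lambda>s. det (replace_col (A s) (L s) i) / det (A s) = y s i) F"
    using tendsto_imp_eventually_ne[OF den det0] sol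
  proof eventually_elim
    case (elim s)
    have "det (replace_col (A s) (L s) i) = y s i * det (A s)"
      using cramer_lemma_mat[OF A _ i, of "vec n (y s)"] i by (simp add: elim(2)[symmetric])
    then show ?case using elim(1) by simp
  qed
  ultimately show ?thesis by (rule Lim_transform_eventually)
qed


text \<open>Within a proper interval every point is a limit point, so one-sided derivatives
  are unique.\<close>

lemma interval_at_within_nontrivial:
  fixes I :: "real set"
  assumes "is_interval I" "a \<in> I" "a' \<in> I" "a \<noteq> a'" "t \<in> I"
  shows "at t within I \<noteq> bot"
proof -
  have "\<And>x. I \<noteq> {x}" using assms(2-4) by auto
  then have "t islimpt I" using is_interval_connected[OF assms(1)] assms(5) by (intro connected_imp_perfect)
  then show ?thesis using trivial_limit_within by blast
qed

lemma has_derivative_zero_vanishing_products: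
  fixes y :: "real \<Rightarrow> nat \<Rightarrow> real" and L :: "nat \<Rightarrow> real \<Rightarrow> real"
  assumes t: "t \<in> I" and y: "\<And>i. i < n \<Longrightarrow> ((\<lambda>s. y s i) \<longlongrightarrow> 0) (at t within I)"
    and L: "\<And>i. i < n \<Longrightarrow> (L i has_real_derivative L' i) (at t within I)"
    and L_t: "\<And>i. i < n \<Longrightarrow> L i t = 0"
    and e: "\<And>s. s \<in> I \<Longrightarrow> e s = (\<Sum>i<n. y s i * L i s)"
  shows "(e has_real_derivative 0) (at t within I)"
proof -
  have e_t: "e t = 0" using e[OF t] L_t by simp
  have "((\<lambda>s. \<Sum>i<n. y s i * ((L i s - L i t) / (s - t))) \<longlongrightarrow> (\<Sum>i<n. 0 * L' i)) (at t within I)"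
    using y L by (intro tendsto_sum tendsto_mult) (auto simp: has_field_derivative_iff)
  moreover have "eventually (\<lambda>s. (\<Sum>i<n. y s i * ((L i s - L i t) / (s - t))) = (e s - e t) / (s - t))
      (at t within I)"
    unfolding eventually_at_filter
    by (intro always_eventually) (simp add: e e_t L_t sum_divide_distrib)
  ultimately have "((\<lambda>s. (e s - e t) / (s - t)) \<longlongrightarrow> 0) (at t within I)"
    by (simp add: Lim_transform_eventually)
  then show ?thesis by (simp add: has_field_derivative_iff)
qed

lemma interval_zero_derivative_const:
  fixes h :: "real \<Rightarrow> real"
  assumes "is_interval I" "\<And>t. t \<in> I \<Longrightarrow> (h has_real_derivative 0) (at t within I)"
    and "s \<in> I" "t \<in> I"
  shows "h s = h t"
  using has_field_derivative_zero_constant[OF is_interval_convex[OF assms(1)] assms(2)] assms(3,4)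
  by metis

definition diff_coeff_curve ::
  "('p \<Rightarrow> 'a::real_vector) set \<Rightarrow> real set \<Rightarrow> (real \<Rightarrow> 'p \<Rightarrow> 'a) \<Rightarrow> ('p \<Rightarrow> 'a) set
   \<Rightarrow> (('p \<Rightarrow> 'a) \<Rightarrow> real \<Rightarrow> real) \<Rightarrow> (('p \<Rightarrow> 'a) \<Rightarrow> real \<Rightarrow> real) \<Rightarrow> bool" where
  "diff_coeff_curve V I u B c c' \<longleftrightarrow> finite B \<and> B \<subseteq> V \<and>
     (\<forall>\<beta>\<in>B. \<forall>t\<in>I. (c \<beta> has_real_derivative c' \<beta> t) (at t within I)) \<and>
     (\<forall>t\<in>I. u t = (\<lambda>x. \<Sum>\<beta>\<in>B. c \<beta> t *\<^sub>R \<beta> x))"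

lemma C1_curve_coefficients:
  assumes "C1_curve V I u"
  obtains B c c' where "diff_coeff_curve V I u B c c'"
proof -
  obtain B c where B: "finite B" "B \<subseteq> V" "\<forall>\<beta>\<in>B. C1_on I (c \<beta>)"
    "\<forall>t\<in>I. u t = (\<lambda>x. \<Sum>\<beta>\<in>B. c \<beta> t *\<^sub>R \<beta> x)"
    using assms unfolding C1_curve_def by blast
  have "\<forall>\<beta>\<in>B. \<exists>c'. \<forall>t\<in>I. (c \<beta> has_real_derivative c' t) (at t within I)"
    using B(3) unfolding C1_on_def by blast
  then obtain c' where "\<forall>\<beta>\<in>B. \<forall>t\<in>I. (c \<beta> has_real_derivative c' \<beta> t) (at t within I)"
    by metis
  then show ?thesis using that B unfolding diff_coeff_curve_def by blast
qed

lemma cross3_rotation_inner: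
  fixes k a b :: "real^3"
  assumes "k \<bullet> k = 1" "k \<bullet> a = 0" "k \<bullet> b = 0"
  shows "cross3 k a \<bullet> cross3 k b = a \<bullet> b"
proof -
  have "cross3 k a \<bullet> cross3 k b = (k \<bullet> k) * (a \<bullet> b) - (k \<bullet> b) * (a \<bullet> k)"
    by (simp add: cross3_simps)
  then show ?thesis using assms by (simp add: inner_commute)
qed


section \<open>The semi-discrete shallow-water system\<close>

text \<open>The hypotheses of the main theorem, with the velocity and depth written in terms
  of differentiable coefficients c, d with respect to finite subsets B1 of V1 and B2
  of V2, and with the time interval I containing two distinct points (so that
  derivatives within I are unique).\<close>

locale semi_discrete_sw =
  fixes M :: "'p measure" and k :: "'p \<Rightarrow> real^3"
    and Hone :: "('p \<Rightarrow> real) set" and grad :: "('p \<Rightarrow> real) \<Rightarrow> ('p \<Rightarrow> real^3)"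
    and Hdiv :: "('p \<Rightarrow> real^3) set" and dvg :: "('p \<Rightarrow> real^3) \<Rightarrow> ('p \<Rightarrow> real)"
    and mesh :: "'p set set"
    and V0 :: "('p \<Rightarrow> real) set" and V1 :: "('p \<Rightarrow> real^3) set" and V2 :: "('p \<Rightarrow> real) set"
    and g :: real and f b :: "'p \<Rightarrow> real" and I :: "real set"
    and u F Q :: "real \<Rightarrow> 'p \<Rightarrow> real^3" and D :: "real \<Rightarrow> 'p \<Rightarrow> real"
    and B1 :: "('p \<Rightarrow> real^3) set" and c c' :: "('p \<Rightarrow> real^3) \<Rightarrow> real \<Rightarrow> real"
    and B2 :: "('p \<Rightarrow> real) set" and d d' :: "('p \<Rightarrow> real) \<Rightarrow> real \<Rightarrow> real"
  assumes calc: "surface_calculus M k Hone grad Hdiv dvg"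
    and spaces: "discrete_spaces M k Hone grad Hdiv dvg mesh V0 V1 V2"
    and f_Linf: "f \<in> borel_measurable M" "bounded_on M f"
    and b_V2: "b \<in> V2"
    and u_V1: "\<forall>t\<in>I. u t \<in> V1"
    and D_V2: "\<forall>t\<in>I. D t \<in> V2"
    and D_pos: "\<forall>t\<in>I. \<forall>x\<in>space M. D t x > 0"
    and F_def: "\<forall>t\<in>I. F t \<in> V1 \<and>
                  (\<forall>w\<in>V1. integral\<^sup>L M (\<lambda>x. w x \<bullet> F t x) = integral\<^sup>L M (\<lambda>x. w x \<bullet> (D t x *\<^sub>R u t x)))"
    and mom: "\<forall>t\<in>I. \<forall>w\<in>V1.
               ((\<lambda>s. integral\<^sup>L M (\<lambda>x. w x \<bullet> u s x)) has_real_derivative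
                  (- integral\<^sup>L M (\<lambda>x. w x \<bullet> perp k (Q t) x)
                   + integral\<^sup>L M (\<lambda>x. dvg w x * (g * (D t x + b x) + (norm (u t x))\<^sup>2 / 2))))
                (at t within I)"
    and cont: "\<forall>t\<in>I. \<forall>\<phi>\<in>V2.
               ((\<lambda>s. integral\<^sup>L M (\<lambda>x. \<phi> x * D s x)) has_real_derivative
                  (- integral\<^sup>L M (\<lambda>x. \<phi> x * dvg (F t) x)))
                (at t within I)"
    and u_curve: "diff_coeff_curve V1 I u B1 c c'"
    and D_curve: "diff_coeff_curve V2 I D B2 d d'"
    and interval: "is_interval I"
    and nontrivial: "\<forall>t\<in>I. at t within I \<noteq> bot"
begin

lemma u_coeffs: "finite B1" "B1 \<subseteq> V1"
    "\<forall>\<beta>\<in>B1. \<forall>t\<in>I. (c \<beta> has_real_derivative c' \<beta> t) (at t within I)"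
    "\<forall>t\<in>I. u t = (\<lambda>x. \<Sum>\<beta>\<in>B1. c \<beta> t *\<^sub>R \<beta> x)"
  using u_curve unfolding diff_coeff_curve_def by auto

lemma D_coeffs: "finite B2" "B2 \<subseteq> V2"
    "\<forall>\<beta>\<in>B2. \<forall>t\<in>I. (d \<beta> has_real_derivative d' \<beta> t) (at t within I)"
    "\<forall>t\<in>I. D t = (\<lambda>x. \<Sum>\<beta>\<in>B2. d \<beta> t *\<^sub>R \<beta> x)"
  using D_curve unfolding diff_coeff_curve_def by auto

definition u_dot :: "real \<Rightarrow> 'p \<Rightarrow> real^3" where
  "u_dot t = (\<lambda>x. \<Sum>\<beta>\<in>B1. c' \<beta> t *\<^sub>R \<beta> x)"

definition D_dot :: "real \<Rightarrow> 'p \<Rightarrow> real" where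
  "D_dot t = (\<lambda>x. \<Sum>\<beta>\<in>B2. d' \<beta> t *\<^sub>R \<beta> x)"

lemma finite_M: "finite_measure M"
  using calc unfolding surface_calculus_def by auto

lemma k_unit: "x \<in> space M \<Longrightarrow> k x \<bullet> k x = 1"
  using calc unfolding surface_calculus_def by (auto simp: power2_norm_eq_inner[symmetric])

lemma findim_V0: "findim V0" and findim_V1: "findim V1" and findim_V2: "findim V2"
  using spaces unfolding discrete_spaces_def by auto

lemma V0_Hone: "\<gamma> \<in> V0 \<Longrightarrow> \<gamma> \<in> Hone"
  using spaces unfolding discrete_spaces_def by auto

lemma V0_bounded: "\<gamma> \<in> V0 \<Longrightarrow> bounded_on M \<gamma>"
  using spaces unfolding discrete_spaces_def by auto

lemma V0_bdd_meas:
  assumes "\<gamma> \<in> V0"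
  shows "bdd_meas M \<gamma>"
proof -
  have "sq_int M \<gamma>" using calc V0_Hone[OF assms] unfolding surface_calculus_def by blast
  then show ?thesis using V0_bounded[OF assms] unfolding bdd_meas_def sq_int_def by blast
qed

lemma V0_definite: "\<gamma> \<in> V0 \<Longrightarrow> integral\<^sup>L M (\<lambda>x. (\<gamma> x)\<^sup>2) = 0 \<Longrightarrow> x \<in> space M \<Longrightarrow> \<gamma> x = 0"
  using spaces unfolding discrete_spaces_def by blast

lemma perp_grad_V1: "\<gamma> \<in> V0 \<Longrightarrow> perp k (grad \<gamma>) \<in> V1"
  using spaces unfolding discrete_spaces_def by auto

lemma V1_Hdiv: "w \<in> V1 \<Longrightarrow> w \<in> Hdiv"
  using spaces unfolding discrete_spaces_def by auto

lemma V1_bdd_meas: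
  assumes "w \<in> V1"
  shows "bdd_meas M w"
proof -
  have "sq_int M w" using calc V1_Hdiv[OF assms] unfolding surface_calculus_def by blast
  moreover have "bounded_on M w" using spaces assms unfolding discrete_spaces_def by blast
  ultimately show ?thesis unfolding bdd_meas_def sq_int_def by blast
qed

lemma V1_tangent:
  assumes "w \<in> V1" "x \<in> space M"
  shows "k x \<bullet> w x = 0"
proof -
  have "tangent M k w" using calc V1_Hdiv[OF assms(1)] unfolding surface_calculus_def by blast
  then show ?thesis using assms(2) unfolding tangent_def by blast
qed

lemma div_V2: "w \<in> V1 \<Longrightarrow> dvg w \<in> V2"
  using spaces unfolding discrete_spaces_def by auto

lemma V2_bdd_meas: "\<phi> \<in> V2 \<Longrightarrow> bdd_meas M \<phi>"
  using spaces unfolding discrete_spaces_def bdd_meas_def sq_int_def by blast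

lemma V2_definite: "\<phi> \<in> V2 \<Longrightarrow> integral\<^sup>L M (\<lambda>x. (\<phi> x)\<^sup>2) = 0 \<Longrightarrow> x \<in> space M \<Longrightarrow> \<phi> x = 0"
  using spaces unfolding discrete_spaces_def by blast

lemma f_bdd_meas: "bdd_meas M f"
  using f_Linf unfolding bdd_meas_def by auto

lemma bdd_meas_integrable_M: "bdd_meas M \<phi> \<Longrightarrow> integrable M \<phi>" for \<phi> :: "'p \<Rightarrow> real"
  using bdd_meas_integrable[OF finite_M] .

lemma F_V1: "t \<in> I \<Longrightarrow> F t \<in> V1"
  using F_def by auto

lemma u_dot_V1: "u_dot t \<in> V1"
  unfolding u_dot_def using u_coeffs by (intro findim_sum[OF findim_V1]) auto

lemma D_dot_V2: "D_dot t \<in> V2"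
  unfolding D_dot_def using D_coeffs by (intro findim_sum[OF findim_V2]) auto

text \<open>Derivatives within I are unique since I has no isolated points.\<close>

lemma deriv_unique:
  "t \<in> I \<Longrightarrow> (h has_real_derivative a) (at t within I) \<Longrightarrow>
   (h has_real_derivative a') (at t within I) \<Longrightarrow> a = a'"
  using has_field_derivative_unique nontrivial by blast

lemma sep_deriv_u_component:
  "t \<in> I \<Longrightarrow> has_sep_derivative M I t (\<lambda>s x. u s x $ l) (\<lambda>x. u_dot t x $ l)"
proof -
  assume t: "t \<in> I"
  have "has_sep_derivative M I t (\<lambda>s x. \<Sum>\<beta>\<in>B1. c \<beta> s * (\<beta> x $ l))
      (\<lambda>x. \<Sum>\<beta>\<in>B1. c' \<beta> t * (\<beta> x $ l))"
    using u_coeffs t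
    by (intro has_sep_derivative_sum has_sep_derivative_product bdd_meas_component V1_bdd_meas) auto
  then show ?thesis
    by (rule has_sep_derivative_cong) (use u_coeffs in \<open>auto simp: u_dot_def\<close>)
qed

lemma sep_deriv_D: "t \<in> I \<Longrightarrow> has_sep_derivative M I t D (D_dot t)"
proof -
  assume t: "t \<in> I"
  have "has_sep_derivative M I t (\<lambda>s x. \<Sum>\<beta>\<in>B2. d \<beta> s * \<beta> x) (\<lambda>x. \<Sum>\<beta>\<in>B2. d' \<beta> t * \<beta> x)"
    using D_coeffs t by (intro has_sep_derivative_sum has_sep_derivative_product V2_bdd_meas) auto
  then show ?thesis
    by (rule has_sep_derivative_cong) (use D_coeffs in \<open>auto simp: D_dot_def\<close>)
qed

lemma sep_deriv_inner_u:
  assumes t: "t \<in> I" and w: "bdd_meas M w"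
  shows "has_sep_derivative M I t (\<lambda>s x. w x \<bullet> u s x) (\<lambda>x. w x \<bullet> u_dot t x)"
proof -
  have "has_sep_derivative M I t (\<lambda>s x. \<Sum>l\<in>UNIV. w x $ l * u s x $ l)
      (\<lambda>x. \<Sum>l\<in>UNIV. 0 * u t x $ l + w x $ l * u_dot t x $ l)"
    using t w
    by (intro has_sep_derivative_sum has_sep_derivative_mult has_sep_derivative_const
        bdd_meas_component sep_deriv_u_component) auto
  then show ?thesis by (rule has_sep_derivative_cong) (auto simp: inner_vec_def)
qed

lemma sep_deriv_u_squared:
  assumes t: "t \<in> I"
  shows "has_sep_derivative M I t (\<lambda>s x. u s x \<bullet> u s x) (\<lambda>x. 2 * (u t x \<bullet> u_dot t x))"
proof -
  have "has_sep_derivative M I t (\<lambda>s x. \<Sum>l\<in>UNIV. u s x $ l * u s x $ l)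
      (\<lambda>x. \<Sum>l\<in>UNIV. u_dot t x $ l * u t x $ l + u t x $ l * u_dot t x $ l)"
    using t by (intro has_sep_derivative_sum has_sep_derivative_mult sep_deriv_u_component) auto
  then show ?thesis
    by (rule has_sep_derivative_cong)
      (auto simp: inner_vec_def sum_distrib_left algebra_simps sum.distrib)
qed

lemma weighted_depth_has_derivative:
  "t \<in> I \<Longrightarrow> bdd_meas M \<phi> \<Longrightarrow>
   ((\<lambda>s. \<integral>x. \<phi> x * D s x \<partial>M) has_real_derivative (\<integral>x. \<phi> x * D_dot t x \<partial>M)) (at t within I)"
proof -
  assume t: "t \<in> I" and \<phi>: "bdd_meas M \<phi>"
  have "((\<lambda>s. \<integral>x. \<phi> x * D s x \<partial>M) has_real_derivative (\<integral>x. 0 * D t x + \<phi> x * D_dot t x \<partial>M))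
      (at t within I)"
    using t \<phi>
    by (intro has_sep_derivative_integral finite_M has_sep_derivative_mult
        has_sep_derivative_const sep_deriv_D)
  then show ?thesis by simp
qed

lemma velocity_test_has_derivative:
  "t \<in> I \<Longrightarrow> bdd_meas M w \<Longrightarrow>
   ((\<lambda>s. \<integral>x. w x \<bullet> u s x \<partial>M) has_real_derivative (\<integral>x. w x \<bullet> u_dot t x \<partial>M)) (at t within I)"
  by (intro has_sep_derivative_integral finite_M sep_deriv_inner_u)

text \<open>The continuity equation holds pointwise: D_dot = - div F.  Indeed the
  V2-function D_dot + div F is L2-orthogonal to itself.\<close>

lemma D_dot_eq:
  assumes t: "t \<in> I" and x: "x \<in> space M"
  shows "D_dot t x = - dvg (F t) x"
proof -
  define \<phi> where "\<phi> = (\<lambda>x. D_dot t x + dvg (F t) x)"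
  have \<phi>_V2: "\<phi> \<in> V2"
    unfolding \<phi>_def using D_dot_V2 div_V2 F_V1 t by (intro findim_add[OF findim_V2]) auto
  then have "(\<integral>x. \<phi> x * D_dot t x \<partial>M) = - integral\<^sup>L M (\<lambda>x. \<phi> x * dvg (F t) x)"
    using cont t deriv_unique weighted_depth_has_derivative[OF t V2_bdd_meas] by blast
  moreover have "bdd_meas M \<phi>" "bdd_meas M (D_dot t)" "bdd_meas M (dvg (F t))"
    using \<phi>_V2 D_dot_V2 div_V2[OF F_V1[OF t]] by (auto intro: V2_bdd_meas)
  then have "integrable M (\<lambda>x. \<phi> x * D_dot t x)" "integrable M (\<lambda>x. \<phi> x * dvg (F t) x)"
    by (auto intro!: bdd_meas_integrable_M bdd_meas_mult)
  moreover have "integral\<^sup>L M (\<lambda>x. (\<phi> x)\<^sup>2) = (\<integral>x. \<phi> x * D_dot t x + \<phi> x * dvg (F t) x \<partial>M)"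
    unfolding \<phi>_def by (simp add: power2_eq_square algebra_simps)
  ultimately have "integral\<^sup>L M (\<lambda>x. (\<phi> x)\<^sup>2) = 0" by simp
  then have "\<phi> x = 0" using V2_definite \<phi>_V2 x by blast
  then show ?thesis unfolding \<phi>_def by simp
qed

lemma momentum_at:
  assumes t: "t \<in> I" and w: "w \<in> V1"
  shows "(\<integral>x. w x \<bullet> u_dot t x \<partial>M) = - integral\<^sup>L M (\<lambda>x. w x \<bullet> perp k (Q t) x)
           + integral\<^sup>L M (\<lambda>x. dvg w x * (g * (D t x + b x) + (norm (u t x))\<^sup>2 / 2))"
  using mom t w deriv_unique velocity_test_has_derivative[OF t V1_bdd_meas[OF w]] by blast


subsection \<open>Energy conservation\<close>

lemma sep_deriv_energy_density:
  assumes t: "t \<in> I"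
  shows "has_sep_derivative M I t
     (\<lambda>s x. D s x * (norm (u s x))\<^sup>2 / 2 + g * ((D s x)\<^sup>2 / 2 + b x * D s x))
     (\<lambda>x. D_dot t x * ((norm (u t x))\<^sup>2 / 2 + g * D t x + g * b x) + D t x * (u t x \<bullet> u_dot t x))"
proof -
  have kinetic: "has_sep_derivative M I t (\<lambda>s x. D s x * (u s x \<bullet> u s x))
      (\<lambda>x. D_dot t x * (u t x \<bullet> u t x) + D t x * (2 * (u t x \<bullet> u_dot t x)))"
    using t by (intro has_sep_derivative_mult sep_deriv_D sep_deriv_u_squared)
  have depth_sq: "has_sep_derivative M I t (\<lambda>s x. D s x * D s x)
      (\<lambda>x. D_dot t x * D t x + D t x * D_dot t x)"
    using t by (intro has_sep_derivative_mult sep_deriv_D)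
  have topography: "has_sep_derivative M I t (\<lambda>s x. b x * D s x) (\<lambda>x. 0 * D t x + b x * D_dot t x)"
    using t b_V2
    by (intro has_sep_derivative_mult sep_deriv_D has_sep_derivative_const V2_bdd_meas)
  have "has_sep_derivative M I t
      (\<lambda>s x. (1/2) * (D s x * (u s x \<bullet> u s x)) + ((g/2) * (D s x * D s x) + g * (b x * D s x)))
      (\<lambda>x. (0 * (D t x * (u t x \<bullet> u t x)) + (1/2) * (D_dot t x * (u t x \<bullet> u t x)
           + D t x * (2 * (u t x \<bullet> u_dot t x))))
         + ((0 * (D t x * D t x) + (g/2) * (D_dot t x * D t x + D t x * D_dot t x))
           + (0 * (b x * D t x) + g * (0 * D t x + b x * D_dot t x))))"
    using t
    by (intro has_sep_derivative_add has_sep_derivative_mult has_sep_derivative_const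
        kinetic depth_sq topography bdd_meas_const)
  moreover have "norm v * norm v = v \<bullet> v" for v :: "real^3"
    by (simp add: power2_norm_eq_inner[symmetric] power2_eq_square)
  ultimately show ?thesis
    by (elim has_sep_derivative_cong) (auto simp: power2_eq_square algebra_simps)
qed

lemma energy_has_derivative_zero:
  assumes Q_F: "\<forall>t\<in>I. Q t = (\<lambda>x. q' t x *\<^sub>R F t x)" and t: "t \<in> I"
  shows "((\<lambda>s. energy M g b (u s) (D s)) has_real_derivative 0) (at t within I)"
proof -
  let ?\<Phi> = "\<lambda>x. (norm (u t x))\<^sup>2 / 2 + g * D t x + g * b x"
  have deriv: "((\<lambda>s. energy M g b (u s) (D s)) has_real_derivative
      (\<integral>x. D_dot t x * ?\<Phi> x + D t x * (u t x \<bullet> u_dot t x) \<partial>M)) (at t within I)"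
    unfolding energy_def using t by (intro has_sep_derivative_integral finite_M sep_deriv_energy_density)
  have u_t: "bdd_meas M (u t)" "bdd_meas M (u_dot t)" using u_V1 t u_dot_V1 V1_bdd_meas by auto
  have D_t: "bdd_meas M (D t)" "bdd_meas M b" "bdd_meas M (D_dot t)"
    using D_V2 t b_V2 D_dot_V2 V2_bdd_meas by auto
  have "bdd_meas M (\<lambda>x. (u t x \<bullet> u t x) * (1/2) + g * D t x + g * b x)"
    using u_t D_t by (intro bdd_meas_add bdd_meas_mult bdd_meas_inner bdd_meas_const)
  then have \<Phi>: "bdd_meas M ?\<Phi>" by (rule bdd_meas_cong) (simp add: power2_norm_eq_inner)
  have integrable: "integrable M (\<lambda>x. D_dot t x * ?\<Phi> x)"
    "integrable M (\<lambda>x. D t x * (u t x \<bullet> u_dot t x))"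
    using u_t D_t \<Phi> by (auto intro!: bdd_meas_integrable_M bdd_meas_mult bdd_meas_inner)
  \<comment> \<open>potential-energy exchange, by the continuity equation\<close>
  have potential: "(\<integral>x. D_dot t x * ?\<Phi> x \<partial>M) = - (\<integral>x. dvg (F t) x * ?\<Phi> x \<partial>M)"
    using t by (simp add: D_dot_eq cong: Bochner_Integration.integral_cong)
  \<comment> \<open>kinetic-energy exchange, by the flux projection and the momentum equation\<close>
  have "\<forall>w\<in>V1. (\<integral>x. w x \<bullet> F t x \<partial>M) = (\<integral>x. w x \<bullet> (D t x *\<^sub>R u t x) \<partial>M)"
    using F_def t by blast
  then have projection: "(\<integral>x. u_dot t x \<bullet> (D t x *\<^sub>R u t x) \<partial>M) = (\<integral>x. u_dot t x \<bullet> F t x \<partial>M)"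
    using u_dot_V1 by (simp only:)
  have "(\<integral>x. D t x * (u t x \<bullet> u_dot t x) \<partial>M) = (\<integral>x. u_dot t x \<bullet> (D t x *\<^sub>R u t x) \<partial>M)"
    by (simp add: inner_commute)
  also have "\<dots> = (\<integral>x. u_dot t x \<bullet> F t x \<partial>M)"
    by (rule projection)
  also have "\<dots> = (\<integral>x. F t x \<bullet> u_dot t x \<partial>M)"
    by (simp add: inner_commute)
  also have "\<dots> = - integral\<^sup>L M (\<lambda>x. F t x \<bullet> perp k (Q t) x)
      + integral\<^sup>L M (\<lambda>x. dvg (F t) x * (g * (D t x + b x) + (norm (u t x))\<^sup>2 / 2))"
    using momentum_at t F_V1 by blast
  also have "integral\<^sup>L M (\<lambda>x. F t x \<bullet> perp k (Q t) x) = 0"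
    using Q_F t by (simp add: perp_def cross_mult_right dot_cross_self)
  finally have kinetic: "(\<integral>x. D t x * (u t x \<bullet> u_dot t x) \<partial>M) = (\<integral>x. dvg (F t) x * ?\<Phi> x \<partial>M)"
    by (simp add: algebra_simps)
  have "(\<integral>x. D_dot t x * ?\<Phi> x + D t x * (u t x \<bullet> u_dot t x) \<partial>M) = 0"
    using integrable potential kinetic by simp
  then show ?thesis using deriv by simp
qed

lemma energy_conserved:
  assumes "\<forall>t\<in>I. Q t = (\<lambda>x. q' t x *\<^sub>R F t x)" "s \<in> I" "t \<in> I"
  shows "energy M g b (u s) (D s) = energy M g b (u t) (D t)"
  using interval_zero_derivative_const[OF interval energy_has_derivative_zero[OF assms(1)] assms(2,3)] .

end


section \<open>Potential-enstrophy conservation\<close>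

locale semi_discrete_sw_pv = semi_discrete_sw +
  fixes \<zeta> q
  assumes pv_flux: "\<forall>t\<in>I. is_disc_vorticity M k grad V0 (u t) (\<zeta> t) \<and>
                      is_disc_pv M V0 f (D t) (\<zeta> t) (q t) \<and> Q t = (\<lambda>x. q t x *\<^sub>R F t x)"
begin

lemma q_V0: "s \<in> I \<Longrightarrow> q s \<in> V0"
  using pv_flux unfolding is_disc_pv_def by auto

lemma \<zeta>_V0: "s \<in> I \<Longrightarrow> \<zeta> s \<in> V0"
  using pv_flux unfolding is_disc_vorticity_def by auto

text \<open>Combining the definitions of vorticity and potential vorticity: testing q D
  with gamma in V0 gives a quantity linear in the velocity.\<close>

lemma pv_test:
  assumes s: "s \<in> I" and \<gamma>: "\<gamma> \<in> V0"
  shows "(\<integral>x. \<gamma> x * q s x * D s x \<partial>M)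
           = - (\<integral>x. perp k (grad \<gamma>) x \<bullet> u s x \<partial>M) + (\<integral>x. \<gamma> x * f x \<partial>M)"
proof -
  have "integrable M (\<lambda>x. \<gamma> x * \<zeta> s x)" "integrable M (\<lambda>x. \<gamma> x * f x)"
    using V0_bdd_meas[OF \<gamma>] V0_bdd_meas[OF \<zeta>_V0[OF s]] f_bdd_meas
    by (auto intro!: bdd_meas_integrable_M bdd_meas_mult)
  moreover have "(\<integral>x. \<gamma> x * q s x * D s x \<partial>M) = (\<integral>x. \<gamma> x * (\<zeta> s x + f x) \<partial>M)"
    using pv_flux s \<gamma> unfolding is_disc_pv_def by auto
  moreover have "(\<integral>x. \<gamma> x * \<zeta> s x \<partial>M) = - (\<integral>x. perp k (grad \<gamma>) x \<bullet> u s x \<partial>M)"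
    using pv_flux s \<gamma> unfolding is_disc_vorticity_def by auto
  ultimately show ?thesis by (simp add: distrib_left)
qed

text \<open>For fixed t, the enstrophy at time s splits into an expression affine in
  (u s, D s) and the defect int (q_s - q_t)^2 D_s, which is quadratic in q_s - q_t.\<close>

definition enstrophy_affine :: "real \<Rightarrow> real \<Rightarrow> real" where
  "enstrophy_affine t = (\<lambda>s. - 2 * (\<integral>x. perp k (grad (q t)) x \<bullet> u s x \<partial>M)
      + 2 * (\<integral>x. q t x * f x \<partial>M) - (\<integral>x. q t x * q t x * D s x \<partial>M))"

definition pv_defect :: "real \<Rightarrow> real \<Rightarrow> real" where
  "pv_defect t = (\<lambda>s. \<integral>x. (q s x - q t x)\<^sup>2 * D s x \<partial>M)"

lemma enstrophy_split:
  assumes s: "s \<in> I" and t: "t \<in> I"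
  shows "enstrophy M (q s) (D s) = enstrophy_affine t s + pv_defect t s"
proof -
  have bdd: "bdd_meas M (q s)" "bdd_meas M (q t)" "bdd_meas M (D s)"
    using q_V0 s t V0_bdd_meas D_V2 V2_bdd_meas by auto
  then have "integrable M (\<lambda>x. q s x * q s x * D s x)" "integrable M (\<lambda>x. q t x * q s x * D s x)"
    "integrable M (\<lambda>x. q t x * q t x * D s x)"
    by (auto intro!: bdd_meas_integrable_M bdd_meas_mult)
  moreover have "pv_defect t s = (\<integral>x. q s x * q s x * D s x - 2 * (q t x * q s x * D s x)
      + q t x * q t x * D s x \<partial>M)"
    unfolding pv_defect_def by (simp add: power2_eq_square algebra_simps)
  ultimately have defect: "pv_defect t s = (\<integral>x. q s x * q s x * D s x \<partial>M)
      - 2 * (\<integral>x. q t x * q s x * D s x \<partial>M) + (\<integral>x. q t x * q t x * D s x \<partial>M)"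
    by simp
  have "enstrophy M (q s) (D s) = (\<integral>x. q s x * q s x * D s x \<partial>M)"
    unfolding enstrophy_def by (simp add: power2_eq_square)
  then show ?thesis
    using defect pv_test[OF s q_V0[OF t]] by (simp add: enstrophy_affine_def)
qed

text \<open>The two contributions to the derivative of the affine part at t are both
  multiples of int q_t grad q_t . F_t: the momentum equation tested with
  perp grad q_t, and the continuity equation combined with Green's formula for
  q_t^2.\<close>

lemma pv_momentum_test:
  assumes t: "t \<in> I"
  shows "(\<integral>x. perp k (grad (q t)) x \<bullet> u_dot t x \<partial>M)
           = - (\<integral>x. q t x * (grad (q t) x \<bullet> F t x) \<partial>M)"
proof -
  let ?w = "perp k (grad (q t))"
  have q_H: "q t \<in> Hone" using V0_Hone q_V0 t by blast
  have grad_tangent: "k x \<bullet> grad (q t) x = 0" if "x \<in> space M" for x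
    using calc q_H that unfolding surface_calculus_def tangent_def by blast
  have "integral\<^sup>L M (\<lambda>x. dvg ?w x * (g * (D t x + b x) + (norm (u t x))\<^sup>2 / 2)) = (\<integral>x. 0 \<partial>M)"
    using calc q_H unfolding surface_calculus_def
    by (intro Bochner_Integration.integral_cong) auto
  moreover have "integral\<^sup>L M (\<lambda>x. ?w x \<bullet> perp k (Q t) x) = (\<integral>x. q t x * (grad (q t) x \<bullet> F t x) \<partial>M)"
  proof (rule Bochner_Integration.integral_cong[OF refl])
    fix x assume x: "x \<in> space M"
    have "?w x \<bullet> perp k (Q t) x = q t x * (cross3 (k x) (grad (q t) x) \<bullet> cross3 (k x) (F t x))"
      using pv_flux t by (simp add: perp_def cross_mult_right)
    also have "\<dots> = q t x * (grad (q t) x \<bullet> F t x)"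
      using cross3_rotation_inner[OF k_unit[OF x] grad_tangent[OF x] V1_tangent[OF F_V1[OF t] x]]
      by simp
    finally show "?w x \<bullet> perp k (Q t) x = q t x * (grad (q t) x \<bullet> F t x)" .
  qed
  ultimately show ?thesis
    using momentum_at[OF t perp_grad_V1[OF q_V0[OF t]]] by simp
qed

lemma pv_depth_test:
  assumes t: "t \<in> I"
  shows "(\<integral>x. q t x * q t x * D_dot t x \<partial>M) = 2 * (\<integral>x. q t x * (grad (q t) x \<bullet> F t x) \<partial>M)"
proof -
  have q_H: "q t \<in> Hone" using V0_Hone q_V0 t by blast
  have product: "(\<lambda>x. q t x * q t x) \<in> Hone"
    "\<forall>x\<in>space M. grad (\<lambda>x. q t x * q t x) x = q t x *\<^sub>R grad (q t) x + q t x *\<^sub>R grad (q t) x"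
    using calc q_H V0_bounded[OF q_V0[OF t]] unfolding surface_calculus_def by blast+
  have green: "(\<integral>x. q t x * q t x * dvg (F t) x \<partial>M)
      = - (\<integral>x. grad (\<lambda>x. q t x * q t x) x \<bullet> F t x \<partial>M)"
    using calc product(1) V1_Hdiv[OF F_V1[OF t]] unfolding surface_calculus_def by auto
  have "(\<integral>x. q t x * q t x * D_dot t x \<partial>M) = - (\<integral>x. q t x * q t x * dvg (F t) x \<partial>M)"
    using t by (simp add: D_dot_eq cong: Bochner_Integration.integral_cong)
  also have "\<dots> = (\<integral>x. grad (\<lambda>x. q t x * q t x) x \<bullet> F t x \<partial>M)"
    using green by simp
  also have "\<dots> = (\<integral>x. 2 * (q t x * (grad (q t) x \<bullet> F t x)) \<partial>M)"
  proof (rule Bochner_Integration.integral_cong[OF refl])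
    fix x assume "x \<in> space M"
    then have "grad (\<lambda>x. q t x * q t x) x = q t x *\<^sub>R grad (q t) x + q t x *\<^sub>R grad (q t) x"
      using product(2) by blast
    then show "grad (\<lambda>x. q t x * q t x) x \<bullet> F t x = 2 * (q t x * (grad (q t) x \<bullet> F t x))"
      by (simp only: inner_add_left inner_scaleR_left)
  qed
  finally show ?thesis by simp
qed

lemma enstrophy_affine_has_derivative_zero:
  assumes t: "t \<in> I"
  shows "(enstrophy_affine t has_real_derivative 0) (at t within I)"
proof -
  have w: "bdd_meas M (perp k (grad (q t)))"
    using V1_bdd_meas perp_grad_V1 q_V0 t by blast
  have qq: "bdd_meas M (\<lambda>x. q t x * q t x)"
    using V0_bdd_meas q_V0 t by (blast intro: bdd_meas_mult)
  have "(enstrophy_affine t has_real_derivative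
      - 2 * (\<integral>x. perp k (grad (q t)) x \<bullet> u_dot t x \<partial>M) + 0 - (\<integral>x. q t x * q t x * D_dot t x \<partial>M))
      (at t within I)"
    unfolding enstrophy_affine_def
    by (intro DERIV_diff DERIV_add DERIV_cmult DERIV_const velocity_test_has_derivative[OF t w]
        weighted_depth_has_derivative[OF t qq])
  then show ?thesis using pv_momentum_test[OF t] pv_depth_test[OF t] by simp
qed

text \<open>The defect is handled in coordinates: we fix a basis beta 0, ..., beta (n - 1)
  of V0 (linearly independent as functions on the surface).\<close>

context
  fixes n :: nat and \<beta>
  assumes basis_V0: "\<And>i. i < n \<Longrightarrow> \<beta> i \<in> V0"
    and basis_span: "\<And>\<gamma>. \<gamma> \<in> V0 \<Longrightarrow> \<exists>y. \<forall>x\<in>space M. \<gamma> x = (\<Sum>i<n. y i * \<beta> i x)"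
    and basis_indep: "\<And>y. \<forall>x\<in>space M. (\<Sum>i<n. y i * \<beta> i x) = 0 \<Longrightarrow> \<forall>i<n. y i = 0"
begin

text \<open>The D_s-weighted Gram matrix of the basis, the coordinates of q_s - q_t, and the
  right-hand side of the linear system they satisfy.\<close>

definition gram :: "real \<Rightarrow> real mat" where
  "gram s = mat n n (\<lambda>(i,j). \<integral>x. \<beta> i x * \<beta> j x * D s x \<partial>M)"

definition pv_coeff :: "real \<Rightarrow> real \<Rightarrow> nat \<Rightarrow> real" where
  "pv_coeff t s = (SOME y. \<forall>x\<in>space M. q s x - q t x = (\<Sum>i<n. y i * \<beta> i x))"

definition pv_rhs :: "real \<Rightarrow> nat \<Rightarrow> real \<Rightarrow> real" where
  "pv_rhs t i = (\<lambda>s. - (\<integral>x. perp k (grad (\<beta> i)) x \<bullet> u s x \<partial>M) + (\<integral>x. perp k (grad (\<beta> i)) x \<bullet> u t x \<partial>M)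
      - (\<integral>x. \<beta> i x * q t x * D s x \<partial>M) + (\<integral>x. \<beta> i x * q t x * D t x \<partial>M))"

lemma basis_bdd_meas: "i < n \<Longrightarrow> bdd_meas M (\<beta> i)"
  using V0_bdd_meas basis_V0 by blast

lemma gram_carrier: "gram s \<in> carrier_mat n n"
  unfolding gram_def by simp

lemma pv_coeff_repr:
  assumes s: "s \<in> I" and t: "t \<in> I"
  shows "\<forall>x\<in>space M. q s x - q t x = (\<Sum>i<n. pv_coeff t s i * \<beta> i x)"
proof -
  have "(\<lambda>x. q s x + (-1) *\<^sub>R q t x) \<in> V0"
    using q_V0 s t by (intro findim_add[OF findim_V0] findim_scale[OF findim_V0]) auto
  then have "\<exists>y. \<forall>x\<in>space M. q s x - q t x = (\<Sum>i<n. y i * \<beta> i x)"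
    using basis_span by auto
  then show ?thesis unfolding pv_coeff_def by (rule someI_ex)
qed

lemma gram_mult_vec:
  assumes s: "s \<in> I" and i: "i < n"
  shows "vec_index (gram s *\<^sub>v vec n y) i = (\<integral>x. \<beta> i x * (\<Sum>j<n. y j * \<beta> j x) * D s x \<partial>M)"
proof -
  have "integrable M (\<lambda>x. \<beta> i x * \<beta> j x * D s x * y j)" if "j < n" for j
    using basis_bdd_meas[OF i] basis_bdd_meas[OF that] D_V2 s V2_bdd_meas
    by (auto intro!: bdd_meas_integrable_M bdd_meas_mult bdd_meas_const)
  then have "(\<Sum>j<n. (\<integral>x. \<beta> i x * \<beta> j x * D s x \<partial>M) * y j)
      = (\<integral>x. (\<Sum>j<n. \<beta> i x * \<beta> j x * D s x * y j) \<partial>M)"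
    by (simp add: Bochner_Integration.integral_sum)
  also have "\<dots> = (\<integral>x. \<beta> i x * (\<Sum>j<n. y j * \<beta> j x) * D s x \<partial>M)"
    by (simp add: sum_distrib_left sum_distrib_right algebra_simps)
  finally show ?thesis
    using i gram_carrier[of s] by (simp add: gram_def scalar_prod_def atLeast0LessThan)
qed

text \<open>Testing the defining relation of q at times s and t with beta i shows that the
  coordinates of q_s - q_t solve the Gram system with right-hand side pv_rhs.\<close>

lemma pv_rhs_eq:
  assumes s: "s \<in> I" and t: "t \<in> I" and i: "i < n"
  shows "(\<integral>x. \<beta> i x * (q s x - q t x) * D s x \<partial>M) = pv_rhs t i s"
proof -
  have "integrable M (\<lambda>x. \<beta> i x * q s x * D s x)" "integrable M (\<lambda>x. \<beta> i x * q t x * D s x)"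
    using basis_bdd_meas[OF i] q_V0 s t V0_bdd_meas D_V2 V2_bdd_meas
    by (auto intro!: bdd_meas_integrable_M bdd_meas_mult)
  then have "(\<integral>x. \<beta> i x * (q s x - q t x) * D s x \<partial>M)
      = (\<integral>x. \<beta> i x * q s x * D s x \<partial>M) - (\<integral>x. \<beta> i x * q t x * D s x \<partial>M)"
    by (simp add: algebra_simps)
  then show ?thesis
    using pv_test[OF s basis_V0[OF i]] pv_test[OF t basis_V0[OF i]] by (simp add: pv_rhs_def)
qed

lemma gram_system:
  assumes s: "s \<in> I" and t: "t \<in> I"
  shows "gram s *\<^sub>v vec n (pv_coeff t s) = vec n (\<lambda>i. pv_rhs t i s)"
proof (rule eq_vecI)
  fix i assume "i < dim_vec (vec n (\<lambda>i. pv_rhs t i s))"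
  then have i: "i < n" by simp
  have "(\<integral>x. \<beta> i x * (\<Sum>j<n. pv_coeff t s j * \<beta> j x) * D s x \<partial>M)
      = (\<integral>x. \<beta> i x * (q s x - q t x) * D s x \<partial>M)"
    using pv_coeff_repr[OF s t] by (intro Bochner_Integration.integral_cong) auto
  then show "vec_index (gram s *\<^sub>v vec n (pv_coeff t s)) i = vec_index (vec n (\<lambda>i. pv_rhs t i s)) i"
    using gram_mult_vec[OF s i] pv_rhs_eq[OF s t i] i by simp
qed (simp add: gram_def)

lemma gram_quadratic_form:
  assumes s: "s \<in> I"
  shows "(\<Sum>i<n. y i * vec_index (gram s *\<^sub>v vec n y) i) = (\<integral>x. (\<Sum>i<n. y i * \<beta> i x)\<^sup>2 * D s x \<partial>M)"
proof -
  have "bdd_meas M (\<lambda>x. \<Sum>j<n. y j * \<beta> j x)"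
    using basis_bdd_meas by (intro bdd_meas_sum bdd_meas_mult bdd_meas_const) auto
  then have "integrable M (\<lambda>x. y i * (\<beta> i x * (\<Sum>j<n. y j * \<beta> j x) * D s x))" if "i < n" for i
    using basis_bdd_meas[OF that] D_V2 s V2_bdd_meas
    by (intro bdd_meas_integrable_M bdd_meas_mult bdd_meas_const) auto
  then have "(\<Sum>i<n. y i * vec_index (gram s *\<^sub>v vec n y) i)
      = (\<integral>x. (\<Sum>i<n. y i * (\<beta> i x * (\<Sum>j<n. y j * \<beta> j x) * D s x)) \<partial>M)"
    by (simp add: gram_mult_vec[OF s] Bochner_Integration.integral_sum)
  also have "\<dots> = (\<integral>x. (\<Sum>i<n. y i * \<beta> i x)\<^sup>2 * D s x \<partial>M)"
  proof (rule Bochner_Integration.integral_cong[OF refl])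
    fix x
    have "(\<Sum>i<n. y i * (\<beta> i x * (\<Sum>j<n. y j * \<beta> j x) * D s x))
        = (\<Sum>i<n. y i * \<beta> i x) * ((\<Sum>j<n. y j * \<beta> j x) * D s x)"
      by (simp add: sum_distrib_right mult.assoc)
    then show "(\<Sum>i<n. y i * (\<beta> i x * (\<Sum>j<n. y j * \<beta> j x) * D s x))
        = (\<Sum>i<n. y i * \<beta> i x)\<^sup>2 * D s x"
      by (simp add: power2_eq_square mult.assoc)
  qed
  finally show ?thesis .
qed

text \<open>Since D > 0, the weighted Gram matrix is positive definite, hence invertible.\<close>

lemma gram_det_nonzero:
  assumes t: "t \<in> I"
  shows "det (gram t) \<noteq> 0"
proof
  assume "det (gram t) = 0"
  then obtain v where v: "v \<in> carrier_vec n" "v \<noteq> 0\<^sub>v n" "gram t *\<^sub>v v = 0\<^sub>v n"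
    using det_0_iff_vec_prod_zero_field[OF gram_carrier] by blast
  define y where "y = vec_index v"
  have v_eq: "v = vec n y" using v(1) unfolding y_def by auto
  define \<gamma> where "\<gamma> = (\<lambda>x. \<Sum>i<n. y i * \<beta> i x)"
  have \<gamma>_V0: "\<gamma> \<in> V0"
    unfolding \<gamma>_def using basis_V0 findim_sum[OF findim_V0, of "{..<n}" \<beta> y] by simp
  have "(\<integral>x. (\<gamma> x)\<^sup>2 * D t x \<partial>M) = 0"
    using gram_quadratic_form[OF t, of y] v(3) unfolding v_eq \<gamma>_def by simp
  moreover have "integrable M (\<lambda>x. (\<gamma> x)\<^sup>2 * D t x)"
    using \<gamma>_V0 D_V2 t V0_bdd_meas V2_bdd_meas
    by (auto simp: power2_eq_square intro!: bdd_meas_integrable_M bdd_meas_mult)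
  moreover have "AE x in M. 0 \<le> (\<gamma> x)\<^sup>2 * D t x"
    using D_pos t by (intro AE_I2) (simp add: less_imp_le)
  ultimately have vanish: "AE x in M. (\<gamma> x)\<^sup>2 * D t x = 0"
    using integral_nonneg_eq_0_iff_AE by blast
  have pos: "D t x > 0" if "x \<in> space M" for x
    using D_pos t that by blast
  have "AE x in M. (\<gamma> x)\<^sup>2 = 0"
    using vanish AE_space by eventually_elim (use pos in fastforce)
  then have "integral\<^sup>L M (\<lambda>x. (\<gamma> x)\<^sup>2) = 0" by (rule integral_eq_zero_AE)
  then have "\<forall>x\<in>space M. \<gamma> x = 0" using V0_definite \<gamma>_V0 by blast
  then have "\<forall>i<n. y i = 0" using basis_indep unfolding \<gamma>_def by blast
  then have "v = 0\<^sub>v n" unfolding v_eq by auto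
  with v(2) show False ..
qed

lemma gram_tendsto:
  assumes t: "t \<in> I" and i: "i < n" and j: "j < n"
  shows "((\<lambda>s. gram s $$ (i,j)) \<longlongrightarrow> gram t $$ (i,j)) (at t within I)"
proof -
  have "bdd_meas M (\<lambda>x. \<beta> i x * \<beta> j x)"
    using basis_bdd_meas i j by (blast intro: bdd_meas_mult)
  then have "continuous (at t within I) (\<lambda>s. \<integral>x. \<beta> i x * \<beta> j x * D s x \<partial>M)"
    using weighted_depth_has_derivative[OF t] by (blast intro: DERIV_continuous)
  then show ?thesis using i j by (simp add: gram_def continuous_within)
qed

lemma pv_rhs_has_derivative:
  assumes t: "t \<in> I" and i: "i < n"
  obtains L' where "(pv_rhs t i has_real_derivative L') (at t within I)"
proof -
  have w: "bdd_meas M (perp k (grad (\<beta> i)))"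
    using V1_bdd_meas perp_grad_V1 basis_V0 i by blast
  have \<beta>q: "bdd_meas M (\<lambda>x. \<beta> i x * q t x)"
    using basis_bdd_meas[OF i] V0_bdd_meas[OF q_V0[OF t]] by (rule bdd_meas_mult)
  have "(pv_rhs t i has_real_derivative - (\<integral>x. perp k (grad (\<beta> i)) x \<bullet> u_dot t x \<partial>M) + 0
      - (\<integral>x. \<beta> i x * q t x * D_dot t x \<partial>M) + 0) (at t within I)"
    unfolding pv_rhs_def
    by (intro DERIV_add DERIV_diff DERIV_minus DERIV_const
        velocity_test_has_derivative[OF t w] weighted_depth_has_derivative[OF t \<beta>q])
  then show ?thesis by (rule that)
qed

lemma pv_rhs_at: "pv_rhs t i t = 0"
  unfolding pv_rhs_def by simp

lemma pv_coeff_tendsto: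
  assumes t: "t \<in> I" and i: "i < n"
  shows "((\<lambda>s. pv_coeff t s i) \<longlongrightarrow> 0) (at t within I)"
proof -
  have rhs_lim: "((\<lambda>s. vec_index (vec n (\<lambda>i. pv_rhs t i s)) j) \<longlongrightarrow> vec_index (vec n (\<lambda>_. 0)) j)
      (at t within I)" if j: "j < n" for j
  proof -
    obtain L' where "(pv_rhs t j has_real_derivative L') (at t within I)"
      using pv_rhs_has_derivative[OF t j] .
    then have "continuous (at t within I) (pv_rhs t j)" by (rule DERIV_continuous)
    then show ?thesis using j pv_rhs_at by (simp add: continuous_within)
  qed
  have "\<forall>s. s \<noteq> t \<longrightarrow> s \<in> I \<longrightarrow> gram s *\<^sub>v vec n (pv_coeff t s) = vec n (\<lambda>i. pv_rhs t i s)"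
    using gram_system t by blast
  then have system: "eventually (\<lambda>s. gram s *\<^sub>v vec n (pv_coeff t s) = vec n (\<lambda>i. pv_rhs t i s))
      (at t within I)"
    unfolding eventually_at_filter by (rule always_eventually)
  have limit_system: "gram t *\<^sub>v vec n (\<lambda>_. 0) = vec n (\<lambda>_. 0)"
  proof (rule eq_vecI)
    fix j assume "j < dim_vec (vec n (\<lambda>_::nat. 0::real))"
    then have j: "j < n" by simp
    show "vec_index (gram t *\<^sub>v vec n (\<lambda>_. 0)) j = vec_index (vec n (\<lambda>_. 0)) j"
      using gram_mult_vec[OF t j] j by simp
  qed (simp add: gram_def)
  show ?thesis
    using linear_system_solution_tendsto[OF gram_carrier gram_carrier gram_det_nonzero[OF t]
        gram_tendsto[OF t] rhs_lim system limit_system i]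
    by simp
qed

text \<open>The defect is the sum of the products of the coordinates (tending to 0) with
  the right-hand sides (differentiable and vanishing at t), so it is o(s - t).\<close>

lemma pv_defect_has_derivative_zero_in_basis:
  assumes t: "t \<in> I"
  shows "(pv_defect t has_real_derivative 0) (at t within I)"
proof -
  have "\<forall>i<n. \<exists>L'. (pv_rhs t i has_real_derivative L') (at t within I)"
    using pv_rhs_has_derivative[OF t] by metis
  then obtain L' where L': "\<And>i. i < n \<Longrightarrow> (pv_rhs t i has_real_derivative L' i) (at t within I)"
    by metis
  have expansion: "pv_defect t s = (\<Sum>i<n. pv_coeff t s i * pv_rhs t i s)" if s: "s \<in> I" for s
  proof -
    have pointwise: "(q s x - q t x)\<^sup>2 * D s x
        = (\<Sum>i<n. pv_coeff t s i * (\<beta> i x * (q s x - q t x) * D s x))" if x: "x \<in> space M" for x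
    proof -
      have "(q s x - q t x)\<^sup>2 * D s x = (\<Sum>i<n. pv_coeff t s i * \<beta> i x) * ((q s x - q t x) * D s x)"
        using pv_coeff_repr[OF s t] x by (simp add: power2_eq_square)
      also have "\<dots> = (\<Sum>i<n. pv_coeff t s i * (\<beta> i x * (q s x - q t x) * D s x))"
        by (simp add: sum_distrib_right mult.assoc)
      finally show ?thesis .
    qed
    have "bdd_meas M (\<lambda>x. q s x - q t x)" "bdd_meas M (D s)"
      using q_V0[OF s] q_V0[OF t] V0_bdd_meas D_V2 s V2_bdd_meas by (auto intro: bdd_meas_diff)
    then have integrable: "integrable M (\<lambda>x. pv_coeff t s i * (\<beta> i x * (q s x - q t x) * D s x))"
      if "i < n" for i
      using basis_bdd_meas[OF that] by (intro bdd_meas_integrable_M bdd_meas_mult bdd_meas_const)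
    have "pv_defect t s = (\<integral>x. (\<Sum>i<n. pv_coeff t s i * (\<beta> i x * (q s x - q t x) * D s x)) \<partial>M)"
      unfolding pv_defect_def using pointwise by (rule Bochner_Integration.integral_cong[OF refl])
    also have "\<dots> = (\<Sum>i<n. pv_coeff t s i * (\<integral>x. \<beta> i x * (q s x - q t x) * D s x \<partial>M))"
      using integrable by (simp add: Bochner_Integration.integral_sum)
    finally show ?thesis using pv_rhs_eq[OF s t] by simp
  qed
  show ?thesis
    using t pv_coeff_tendsto[OF t] L' pv_rhs_at expansion by (rule has_derivative_zero_vanishing_products)
qed

end

text \<open>The same statement without a chosen basis: V0 always has one.\<close>

lemma pv_defect_has_derivative_zero:
  assumes t: "t \<in> I"
  shows "(pv_defect t has_real_derivative 0) (at t within I)"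
proof (rule findim_indexed_basis[OF findim_V0, where S = "space M"])
  fix n :: nat and \<beta> assume basis: "\<And>i. i < n \<Longrightarrow> \<beta> i \<in> V0"
    "\<And>\<gamma>. \<gamma> \<in> V0 \<Longrightarrow> \<exists>y. \<forall>x\<in>space M. \<gamma> x = (\<Sum>i<n. y i * \<beta> i x)"
    "\<And>y. \<forall>x\<in>space M. (\<Sum>i<n. y i * \<beta> i x) = 0 \<Longrightarrow> \<forall>i<n. y i = 0"
  show ?thesis by (rule pv_defect_has_derivative_zero_in_basis[OF basis t])
qed

lemma enstrophy_has_derivative_zero:
  assumes t: "t \<in> I"
  shows "((\<lambda>s. enstrophy M (q s) (D s)) has_real_derivative 0) (at t within I)"
proof -
  have "((\<lambda>s. enstrophy_affine t s + pv_defect t s) has_real_derivative 0 + 0) (at t within I)"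
    using enstrophy_affine_has_derivative_zero[OF t] pv_defect_has_derivative_zero[OF t]
    by (rule DERIV_add)
  then have "((\<lambda>s. enstrophy_affine t s + pv_defect t s) has_real_derivative 0) (at t within I)"
    by simp
  then show ?thesis
    by (rule has_field_derivative_transform_within[where d=1]) (auto simp: t enstrophy_split[OF _ t])
qed

lemma enstrophy_conserved:
  assumes "s \<in> I" "t \<in> I"
  shows "enstrophy M (q s) (D s) = enstrophy M (q t) (D t)"
  using interval_zero_derivative_const[OF interval enstrophy_has_derivative_zero assms] .

end


theorem mainTheorem4:
  fixes M :: "'p measure" and k :: "'p \<Rightarrow> real^3"
    and Hone :: "('p \<Rightarrow> real) set" and grad :: "('p \<Rightarrow> real) \<Rightarrow> ('p \<Rightarrow> real^3)"
    and Hdiv :: "('p \<Rightarrow> real^3) set" and dvg :: "('p \<Rightarrow> real^3) \<Rightarrow> ('p \<Rightarrow> real)"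
    and mesh :: "'p set set"
    and V0 :: "('p \<Rightarrow> real) set" and V1 :: "('p \<Rightarrow> real^3) set" and V2 :: "('p \<Rightarrow> real) set"
    and g :: real and f b :: "'p \<Rightarrow> real" and I :: "real set"
    and u F Q :: "real \<Rightarrow> 'p \<Rightarrow> real^3" and D :: "real \<Rightarrow> 'p \<Rightarrow> real"
  assumes calc: "surface_calculus M k Hone grad Hdiv dvg"
    and spaces: "discrete_spaces M k Hone grad Hdiv dvg mesh V0 V1 V2"
    and g_pos: "g > 0"
    and f_Linf: "f \<in> borel_measurable M" "bounded_on M f"
    and b_V2: "b \<in> V2"
    and I_int: "is_interval I"
    and u_C1: "C1_curve V1 I u" and u_V1: "\<forall>t\<in>I. u t \<in> V1"
    and D_C1: "C1_curve V2 I D" and D_V2: "\<forall>t\<in>I. D t \<in> V2"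
    and D_pos: "\<forall>t\<in>I. \<forall>x\<in>space M. D t x > 0"
    and F_def: "\<forall>t\<in>I. F t \<in> V1 \<and>
                  (\<forall>w\<in>V1. integral\<^sup>L M (\<lambda>x. w x \<bullet> F t x) = integral\<^sup>L M (\<lambda>x. w x \<bullet> (D t x *\<^sub>R u t x)))"
    and Q_L2: "\<forall>t\<in>I. sq_int M (Q t) \<and> tangent M k (Q t)"
    and mom: "\<forall>t\<in>I. \<forall>w\<in>V1.
               ((\<lambda>s. integral\<^sup>L M (\<lambda>x. w x \<bullet> u s x)) has_real_derivative
                  (- integral\<^sup>L M (\<lambda>x. w x \<bullet> perp k (Q t) x)
                   + integral\<^sup>L M (\<lambda>x. dvg w x * (g * (D t x + b x) + (norm (u t x))\<^sup>2 / 2))))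
                (at t within I)"
    and cont: "\<forall>t\<in>I. \<forall>\<phi>\<in>V2.
               ((\<lambda>s. integral\<^sup>L M (\<lambda>x. \<phi> x * D s x)) has_real_derivative
                  (- integral\<^sup>L M (\<lambda>x. \<phi> x * dvg (F t) x)))
                (at t within I)"
  shows "((\<exists>q' :: real \<Rightarrow> 'p \<Rightarrow> real. \<forall>t\<in>I. Q t = (\<lambda>x. q' t x *\<^sub>R F t x)) \<longrightarrow>
            (\<forall>s\<in>I. \<forall>t\<in>I. energy M g b (u s) (D s) = energy M g b (u t) (D t)))
       \<and> (\<forall>\<zeta> q :: real \<Rightarrow> 'p \<Rightarrow> real.
            (\<forall>t\<in>I. is_disc_vorticity M k grad V0 (u t) (\<zeta> t) \<and>
                    is_disc_pv M V0 f (D t) (\<zeta> t) (q t) \<and>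
                    Q t = (\<lambda>x. q t x *\<^sub>R F t x)) \<longrightarrow>
            (\<forall>s\<in>I. \<forall>t\<in>I. energy M g b (u s) (D s) = energy M g b (u t) (D t) \<and>
                           enstrophy M (q s) (D s) = enstrophy M (q t) (D t)))"
proof (cases "\<exists>a\<in>I. \<exists>a'\<in>I. a \<noteq> a'")
  case False
  then have singleton: "s = t" if "s \<in> I" "t \<in> I" for s t
    using that by blast
  show ?thesis by (auto dest: singleton)
next
  case True
  then have nontrivial: "\<forall>t\<in>I. at t within I \<noteq> bot"
    using interval_at_within_nontrivial[OF I_int] by blast
  obtain B1 c c' where u_curve: "diff_coeff_curve V1 I u B1 c c'"
    using C1_curve_coefficients[OF u_C1] by blast
  obtain B2 d d' where D_curve: "diff_coeff_curve V2 I D B2 d d'"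
    using C1_curve_coefficients[OF D_C1] by blast
  interpret semi_discrete_sw M k Hone grad Hdiv dvg mesh V0 V1 V2 g f b I u F Q D B1 c c' B2 d d'
    using calc spaces f_Linf b_V2 u_V1 D_V2 D_pos F_def mom cont u_curve D_curve I_int nontrivial
    by unfold_locales auto
  show ?thesis
  proof (intro conjI impI allI ballI)
    fix s t assume "\<exists>q'. \<forall>t\<in>I. Q t = (\<lambda>x. q' t x *\<^sub>R F t x)" "s \<in> I" "t \<in> I"
    then show "energy M g b (u s) (D s) = energy M g b (u t) (D t)"
      using energy_conserved by blast
  next
    fix \<zeta> q s t
    assume pv: "\<forall>t\<in>I. is_disc_vorticity M k grad V0 (u t) (\<zeta> t) \<and> is_disc_pv M V0 f (D t) (\<zeta> t) (q t)
        \<and> Q t = (\<lambda>x. q t x *\<^sub>R F t x)" and st: "s \<in> I" "t \<in> I"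
    interpret semi_discrete_sw_pv M k Hone grad Hdiv dvg mesh V0 V1 V2 g f b I u F Q D
        B1 c c' B2 d d' \<zeta> q
      using pv by unfold_locales
    show "energy M g b (u s) (D s) = energy M g b (u t) (D t)"
      using energy_conserved[of q] pv st by blast
    show "enstrophy M (q s) (D s) = enstrophy M (q t) (D t)"
      using enstrophy_conserved[OF st] .
  qed
qed

end
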